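(* Let $x,y\in\{0,1\}^\infty$ be independent sequences, both with randomness rate $\tau>0$; let $0<\sigma<\tau$, $0<\sigma'<\tau-\sigma$, $b=\lceil(1-\sigma)/\sigma'\rceil$, let $a$ be a positive integer, and let $t_0=0$, $t_1=a$, $t_i=b(t_1+\cdots+t_{i-1})$ for $i\ge2$. Let $x_i=x(t_{i-1}+1:t_i)$, $y_i=y(t_{i-1}+1:t_i)$, $\bar{x}_i=x(1:t_i)$, $\bar{y}_i=y(1:t_i)$ (with $\bar{x}_0,\bar{y}_0$ the empty string). Then there is a constant $c$ such that for all $i,j\ge1$: (a) $\big|K(x_i\mid\bar{x}_{i-1}\bar{y}_j)-K(x_i\mid\bar{x}_{i-1})\big|\le c(i+j)$; (b) $\big|K(y_i\mid\bar{x}_j\bar{y}_{i-1})-K(y_i\mid\bar{y}_{i-1})\big|\le c(i+j)$.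
   Context: $x(n_1:n_2)$ denotes bits $n_1$ through $n_2$ of $x$ (indexed from 1); juxtaposition is concatenation, so e.g. $K(u\mid vw)$ conditions on the concatenated string $vw$. $K(u)$, $K(u\mid v)$ are plain and conditional plain Kolmogorov complexity with respect to fixed universal machines. A sequence has randomness rate $\tau$ if $K(x(1:n))\ge\tau n$ for all but finitely many $n$. Sequences $x,y$ are independent if there is a constant $c_0$ with $K(x(1:n)y(1:m))\ge K(x(1:n))+K(y(1:m))-c_0(1+\log n+\log m)$ for all $n,m\ge1$. *)

theory Defs
  imports Complex_Main
begin

datatype recf = Z | S | Proj nat | Comp recf "recf list" | Prec recf recf | Mn recf

inductive eval :: "recf \<Rightarrow> nat list \<Rightarrow> nat \<Rightarrow> bool" where
  ev_Z: "eval Z xs 0"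
| ev_S: "eval S (x # xs) (Suc x)"
| ev_Proj: "eval (Proj i) xs (if i < length xs then xs ! i else 0)"
| ev_Comp: "length ys = length gs \<Longrightarrow> (\<forall>k<length gs. eval (gs ! k) xs (ys ! k))
            \<Longrightarrow> eval f ys y \<Longrightarrow> eval (Comp f gs) xs y"
| ev_Prec0: "eval f xs y \<Longrightarrow> eval (Prec f g) (0 # xs) y"
| ev_PrecS: "eval (Prec f g) (n # xs) r \<Longrightarrow> eval g (n # r # xs) y
            \<Longrightarrow> eval (Prec f g) (Suc n # xs) y"
| ev_Mn: "eval f (y # xs) 0 \<Longrightarrow> (\<forall>z<y. \<exists>v. eval f (z # xs) v \<and> v > 0)
            \<Longrightarrow> eval (Mn f) xs y"

fun enc :: "bool list \<Rightarrow> nat" where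
  "enc [] = 0"
| "enc (b # bs) = 2 * enc bs + (if b then 2 else 1)"

definition computable1 :: "(bool list \<Rightarrow> bool list option) \<Rightarrow> bool" where
  "computable1 F \<longleftrightarrow> (\<exists>r. \<forall>p w. eval r [enc p] (enc w) \<longleftrightarrow> F p = Some w)"

definition computable2 :: "(bool list \<Rightarrow> bool list \<Rightarrow> bool list option) \<Rightarrow> bool" where
  "computable2 F \<longleftrightarrow> (\<exists>r. \<forall>p v w. eval r [enc p, enc v] (enc w) \<longleftrightarrow> F p v = Some w)"

definition universal1 :: "(bool list \<Rightarrow> bool list option) \<Rightarrow> bool" where
  "universal1 U \<longleftrightarrow> computable1 U \<and>
     (\<forall>V. computable1 V \<longrightarrow> (\<exists>c. \<forall>p u. V p = Some u \<longrightarrow>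
        (\<exists>q. U q = Some u \<and> length q \<le> length p + c)))"

definition universal2 :: "(bool list \<Rightarrow> bool list \<Rightarrow> bool list option) \<Rightarrow> bool" where
  "universal2 U \<longleftrightarrow> computable2 U \<and>
     (\<forall>V. computable2 V \<longrightarrow> (\<exists>c. \<forall>p v u. V p v = Some u \<longrightarrow>
        (\<exists>q. U q v = Some u \<and> length q \<le> length p + c)))"

definition KP :: "(bool list \<Rightarrow> bool list option) \<Rightarrow> bool list \<Rightarrow> nat" where
  "KP U u = (LEAST n. \<exists>p. length p = n \<and> U p = Some u)"

definition KC :: "(bool list \<Rightarrow> bool list \<Rightarrow> bool list option) \<Rightarrow> bool list \<Rightarrow> bool list \<Rightarrow> nat" where
  "KC U u v = (LEAST n. \<exists>p. length p = n \<and> U p v = Some u)"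

text \<open>An infinite binary sequence is \<open>x :: nat \<Rightarrow> bool\<close>, bits indexed from 1
  (the value \<open>x 0\<close> is never used). \<open>seg x n1 n2\<close> is \<open>x(n1:n2)\<close>.\<close>

definition seg :: "(nat \<Rightarrow> bool) \<Rightarrow> nat \<Rightarrow> nat \<Rightarrow> bool list" where
  "seg x n1 n2 = map x [n1..<Suc n2]"

definition rand_rate :: "(bool list \<Rightarrow> bool list option) \<Rightarrow> real \<Rightarrow> (nat \<Rightarrow> bool) \<Rightarrow> bool" where
  "rand_rate U \<tau> x \<longleftrightarrow> (\<forall>\<^sub>F n in sequentially. real (KP U (seg x 1 n)) \<ge> \<tau> * real n)"

definition indep :: "(bool list \<Rightarrow> bool list option) \<Rightarrow> (nat \<Rightarrow> bool) \<Rightarrow> (nat \<Rightarrow> bool) \<Rightarrow> bool" where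
  "indep U x y \<longleftrightarrow> (\<exists>c0. \<forall>n\<ge>1. \<forall>m\<ge>1.
     real (KP U (seg x 1 n @ seg y 1 m)) \<ge>
       real (KP U (seg x 1 n)) + real (KP U (seg y 1 m))
       - c0 * (1 + log 2 (real n) + log 2 (real m)))"

fun tb :: "nat \<Rightarrow> nat \<Rightarrow> nat \<Rightarrow> nat" where
  "tb a b 0 = 0"
| "tb a b (Suc 0) = a"
| "tb a b (Suc (Suc k)) = b * (\<Sum>l\<in>{1..Suc k}. tb a b l)"

end

theory Submission
  imports Defs
begin

text \<open>Write \<open>P = x(1 : t (i - 1))\<close>, \<open>X = x(t (i - 1) + 1 : t i)\<close> and \<open>Y = y(1 : t j)\<close>. Adding \<open>Y\<close> to the condition raises
  \<open>K(X | P)\<close> by at most \<open>O(log |Y|)\<close>. Conversely, up to logarithmic terms, symmetry of information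
  gives \<open>K(X | P) \<le> K(P X) - K(P)\<close>, while \<open>K(P X Y) \<le> K(P Y) + K(X | P Y) \<le> K(P) + K(Y) + K(X | P Y)\<close>;
  hence \<open>K(X | P) - K(X | P Y)\<close> is at most the mutual information \<open>K(P X) + K(Y) - K(P X Y)\<close> of the
  prefixes \<open>P X\<close> of \<open>x\<close> and \<open>Y\<close> of \<open>y\<close>, which independence bounds by \<open>O(log t i + log t j)\<close>. Part (b) is
  the same argument with the condition extended on the left. Since the randomness rate is at most 1,
  \<open>b \<ge> 1\<close> and the block ends \<open>t i\<close> grow geometrically, so all logarithmic terms are \<open>O(i + j)\<close>.

  The hard direction of symmetry of information is the usual counting argument over an enumeration
  of the outputs of short programs. Machines are Kleene's \<open>\<mu>\<close>-recursive functions; the enumeration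
  is computable because evaluation with a step budget is primitive recursive.\<close>

inductive_cases eval_ZE: "eval Z xs y"
inductive_cases eval_SE: "eval S xs y"
inductive_cases eval_ProjE: "eval (Proj i) xs y"
inductive_cases eval_CompE: "eval (Comp f gs) xs y"
inductive_cases eval_Prec0E: "eval (Prec f g) (0 # xs) y"
inductive_cases eval_PrecSE: "eval (Prec f g) (Suc n # xs) y"
inductive_cases eval_MnE: "eval (Mn f) xs y"
inductive_cases eval_PrecE: "eval (Prec f g) xs y"

lemma eval_deterministic: "eval r xs y \<Longrightarrow> eval r xs y' \<Longrightarrow> y = y'"
proof (induction arbitrary: y' rule: eval.induct)
  case (ev_Z xs) from ev_Z.prems show ?case by (rule eval_ZE) simp
next
  case (ev_S x xs) from ev_S.prems show ?case by (rule eval_SE) simp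
next
  case (ev_Proj i xs) from ev_Proj.prems show ?case by (rule eval_ProjE) simp
next
  case (ev_Comp ys gs xs f y)
  from ev_Comp.prems obtain ys' where ys': "length ys' = length gs"
    "\<forall>k<length gs. eval (gs ! k) xs (ys' ! k)" "eval f ys' y'"
    by (rule eval_CompE)
  have "ys' = ys"
  proof (rule nth_equalityI)
    show "length ys' = length ys" using ev_Comp.hyps(1) ys'(1) by simp
    fix k assume "k < length ys'"
    then have k: "k < length gs" using ys'(1) by simp
    then have "\<forall>y'. eval (gs ! k) xs y' \<longrightarrow> ys ! k = y'" using ev_Comp.IH(1) by blast
    then show "ys' ! k = ys ! k" using ys'(2) k by (metis)
  qed
  then show ?case using ev_Comp.IH(2) ys'(3) by simp
next
  case (ev_Prec0 f xs y g) from ev_Prec0.prems show ?case by (rule eval_Prec0E) (use ev_Prec0.IH in blast)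
next
  case (ev_PrecS f g n xs r y)
  from ev_PrecS.prems show ?case by (rule eval_PrecSE) (use ev_PrecS.IH in simp)
next
  case (ev_Mn f y xs)
  from ev_Mn.prems have zero: "eval f (y' # xs) 0" and pos: "\<forall>z<y'. \<exists>v. eval f (z # xs) v \<and> v > 0"
    by (rule eval_MnE, blast)+
  show ?case
  proof (rule linorder_cases[of y y'])
    assume "y < y'"
    then obtain v where "eval f (y # xs) v" "0 < v" using pos by blast
    then show ?thesis using ev_Mn.IH(1) by fastforce
  next
    assume "y' < y"
    then obtain v where "eval f (y' # xs) v \<and> (\<forall>x. eval f (y' # xs) x \<longrightarrow> v = x)" "0 < v"
      using ev_Mn.IH(2) by blast
    then show ?thesis using zero by fastforce
  qed
qed

definition partial_rec :: "nat \<Rightarrow> (nat list \<Rightarrow> nat option) \<Rightarrow> bool" where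
  "partial_rec n F \<longleftrightarrow> (\<exists>r. \<forall>xs. length xs = n \<longrightarrow> (\<forall>y. eval r xs y \<longleftrightarrow> F xs = Some y))"

abbreviation total_rec :: "nat \<Rightarrow> (nat list \<Rightarrow> nat) \<Rightarrow> bool" where
  "total_rec n f \<equiv> partial_rec n (\<lambda>xs. Some (f xs))"

lemma partial_rec_cong: "partial_rec n F \<Longrightarrow> (\<And>xs. length xs = n \<Longrightarrow> F xs = G xs) \<Longrightarrow> partial_rec n G"
  unfolding partial_rec_def by metis

lemma total_rec_cong: "total_rec n f \<Longrightarrow> (\<And>xs. length xs = n \<Longrightarrow> f xs = g xs) \<Longrightarrow> total_rec n g"
  by (erule partial_rec_cong) simp

lemma total_recI: "(\<And>xs. length xs = n \<Longrightarrow> eval r xs (f xs)) \<Longrightarrow> total_rec n f"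
  unfolding partial_rec_def by (metis eval_deterministic option.inject)

fun const_recf :: "nat \<Rightarrow> recf" where
  "const_recf 0 = Z" | "const_recf (Suc c) = Comp S [const_recf c]"

lemma eval_const_recf: "eval (const_recf c) xs c"
proof (induction c)
  case 0 then show ?case by (simp add: ev_Z)
next
  case (Suc c)
  have "eval S [c] (Suc c)" by (rule ev_S)
  then have "eval (Comp S [const_recf c]) xs (Suc c)" using Suc by (intro ev_Comp[of "[c]"]) (simp_all add: less_Suc_eq)
  then show ?case by simp
qed

lemma total_rec_const: "total_rec n (\<lambda>xs. c)"
  by (rule total_recI[of _ "const_recf c"]) (rule eval_const_recf)

lemma total_rec_proj: "i < n \<Longrightarrow> total_rec n (\<lambda>xs. xs ! i)"
  by (rule total_recI[of _ "Proj i"]) (metis ev_Proj)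

lemma total_rec_S: "total_rec 1 (\<lambda>xs. Suc (xs ! 0))"
proof (rule total_recI[of _ S])
  fix xs :: "nat list" assume "length xs = 1"
  then obtain x where "xs = [x]" by (metis One_nat_def length_0_conv length_Suc_conv)
  then show "eval S xs (Suc (xs ! 0))" by (simp add: ev_S)
qed

lemma partial_rec_list:
  assumes "\<forall>G\<in>set Gs. partial_rec n G"
  shows "\<exists>rs. length rs = length Gs \<and> (\<forall>k<length Gs. \<forall>xs. length xs = n \<longrightarrow> (\<forall>y. eval (rs!k) xs y \<longleftrightarrow> (Gs!k) xs = Some y))"
  using assms
proof (induction Gs)
  case Nil then show ?case by simp
next
  case (Cons G Gs)
  then obtain rs where rs: "length rs = length Gs" "\<forall>k<length Gs. \<forall>xs. length xs = n \<longrightarrow> (\<forall>y. eval (rs!k) xs y \<longleftrightarrow> (Gs!k) xs = Some y)" by auto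
  from Cons.prems obtain r where r: "\<forall>xs. length xs = n \<longrightarrow> (\<forall>y. eval r xs y \<longleftrightarrow> G xs = Some y)" unfolding partial_rec_def by auto
  show ?case
  proof (intro exI[of _ "r # rs"] conjI allI impI)
    show "length (r # rs) = length (G # Gs)" using rs by simp
    fix k and xs :: "nat list" and y assume "k < length (G # Gs)" "length xs = n"
    then show "eval ((r # rs) ! k) xs y \<longleftrightarrow> ((G # Gs) ! k) xs = Some y"
      using rs r by (cases k) auto
  qed
qed

lemma partial_rec_comp:
  assumes F: "partial_rec m F" and len: "length Gs = m" and G: "\<forall>G\<in>set Gs. partial_rec n G"
  shows "partial_rec n (\<lambda>xs. if (\<forall>G\<in>set Gs. G xs \<noteq> None) then F (map (\<lambda>G. the (G xs)) Gs) else None)"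
proof -
  obtain rs where rs: "length rs = length Gs" "\<forall>k<length Gs. \<forall>xs. length xs = n \<longrightarrow> (\<forall>y. eval (rs!k) xs y \<longleftrightarrow> (Gs!k) xs = Some y)"
    using partial_rec_list[OF G] by blast
  obtain rF where rF: "\<forall>xs. length xs = m \<longrightarrow> (\<forall>y. eval rF xs y \<longleftrightarrow> F xs = Some y)"
    using F unfolding partial_rec_def by blast
  show ?thesis unfolding partial_rec_def
  proof (intro exI[of _ "Comp rF rs"] allI impI)
    fix xs :: "nat list" and y assume xs: "length xs = n"
    show "eval (Comp rF rs) xs y \<longleftrightarrow> (if (\<forall>G\<in>set Gs. G xs \<noteq> None) then F (map (\<lambda>G. the (G xs)) Gs) else None) = Some y"
    proof
      assume "eval (Comp rF rs) xs y"
      then obtain ys where ys: "length ys = length rs" "\<forall>k<length rs. eval (rs ! k) xs (ys ! k)" "eval rF ys y"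
        by (rule eval_CompE)
      have gk: "\<forall>k<length Gs. (Gs!k) xs = Some (ys!k)" using ys(2) rs xs by auto
      have all: "\<forall>G\<in>set Gs. G xs \<noteq> None" using gk by (metis in_set_conv_nth option.distinct(1))
      have "map (\<lambda>G. the (G xs)) Gs = ys"
        by (rule nth_equalityI) (use ys(1) rs(1) gk in auto)
      then show "(if (\<forall>G\<in>set Gs. G xs \<noteq> None) then F (map (\<lambda>G. the (G xs)) Gs) else None) = Some y"
        using all ys(3) rF ys(1) rs(1) len by auto
    next
      assume h: "(if (\<forall>G\<in>set Gs. G xs \<noteq> None) then F (map (\<lambda>G. the (G xs)) Gs) else None) = Some y"
      then have all: "\<forall>G\<in>set Gs. G xs \<noteq> None" by (metis option.distinct(1))
      with h have Fy: "F (map (\<lambda>G. the (G xs)) Gs) = Some y" by simp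
      let ?ys = "map (\<lambda>G. the (G xs)) Gs"
      have "\<forall>k<length rs. eval (rs ! k) xs (?ys ! k)"
        using rs xs all by (auto simp: nth_mem)
      moreover have "eval rF ?ys y" using rF Fy len by simp
      ultimately show "eval (Comp rF rs) xs y"
        by (intro ev_Comp) (use rs(1) in auto)
    qed
  qed
qed

lemma total_rec_comp:
  assumes "total_rec m f" "length gs = m" "\<forall>g\<in>set gs. total_rec n g"
  shows "total_rec n (\<lambda>xs. f (map (\<lambda>g. g xs) gs))"
proof -
  have "partial_rec n (\<lambda>xs. if (\<forall>G\<in>set (map (\<lambda>g xs. Some (g xs)) gs). G xs \<noteq> None)
      then Some (f (map (\<lambda>G. the (G xs)) (map (\<lambda>g xs. Some (g xs)) gs))) else None)"
    by (rule partial_rec_comp) (use assms in auto)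
  then show ?thesis by (rule partial_rec_cong) (simp add: comp_def)
qed

lemma partial_rec_comp_tot:
  assumes "partial_rec m F" "length gs = m" "\<forall>g\<in>set gs. total_rec n g"
  shows "partial_rec n (\<lambda>xs. F (map (\<lambda>g. g xs) gs))"
proof -
  have "partial_rec n (\<lambda>xs. if (\<forall>G\<in>set (map (\<lambda>g xs. Some (g xs)) gs). G xs \<noteq> None)
      then F (map (\<lambda>G. the (G xs)) (map (\<lambda>g xs. Some (g xs)) gs)) else None)"
    by (rule partial_rec_comp) (use assms in auto)
  then show ?thesis by (rule partial_rec_cong) (simp add: comp_def)
qed

lemma total_rec_Suc: "total_rec n f \<Longrightarrow> total_rec n (\<lambda>xs. Suc (f xs))"
  using total_rec_comp[OF total_rec_S, of "[f]" n] by simp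

lemma map_nth_upt: "length xs = n \<Longrightarrow> map (\<lambda>i. xs ! i) [0..<n] = xs"
  by (metis map_nth)

lemma total_rec_projs: "\<forall>g\<in>set (map (\<lambda>i xs. xs ! i) [0..<n]). total_rec n g"
  by (auto intro: total_rec_proj)

lemma eval_Prec_rec_nat:
  assumes f: "\<forall>ys. length ys = n \<longrightarrow> eval rf ys (f ys)"
    and g: "\<forall>ys. length ys = Suc (Suc n) \<longrightarrow> eval rg ys (g ys)"
    and ys: "length ys = n"
  shows "eval (Prec rf rg) (k # ys) (rec_nat (f ys) (\<lambda>i acc. g (i # acc # ys)) k)"
proof (induction k)
  case 0 then show ?case using f ys by (simp add: ev_Prec0)
next
  case (Suc k)
  then show ?case using g ys by (auto intro: ev_PrecS)
qed

lemma total_rec_prec0: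
  assumes "total_rec n f" "total_rec (Suc (Suc n)) g"
  shows "total_rec (Suc n) (\<lambda>xs. rec_nat (f (tl xs)) (\<lambda>i acc. g (i # acc # tl xs)) (hd xs))"
proof -
  obtain rf where rf: "\<forall>xs. length xs = n \<longrightarrow> eval rf xs (f xs)" using assms(1) unfolding partial_rec_def by blast
  obtain rg where rg: "\<forall>xs. length xs = Suc (Suc n) \<longrightarrow> eval rg xs (g xs)" using assms(2) unfolding partial_rec_def by blast
  show ?thesis
  proof (rule total_recI[of _ "Prec rf rg"])
    fix xs :: "nat list" assume "length xs = Suc n"
    then obtain k ys where "xs = k # ys" "length ys = n" by (metis length_Suc_conv)
    then show "eval (Prec rf rg) xs (rec_nat (f (tl xs)) (\<lambda>i acc. g (i # acc # tl xs)) (hd xs))"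
      using eval_Prec_rec_nat[OF rf rg] by simp
  qed
qed

lemma total_rec_rec:
  assumes "total_rec n k" "total_rec n z" "total_rec (Suc (Suc n)) st"
  shows "total_rec n (\<lambda>xs. rec_nat (z xs) (\<lambda>i acc. st (i # acc # xs)) (k xs))"
proof -
  have "total_rec n (\<lambda>xs. (\<lambda>ys. rec_nat (z (tl ys)) (\<lambda>i acc. st (i # acc # tl ys)) (hd ys)) (map (\<lambda>g. g xs) (k # map (\<lambda>i xs. xs ! i) [0..<n])))"
    by (rule total_rec_comp[OF total_rec_prec0[OF assms(2,3)]]) (use assms(1) total_rec_projs in auto)
  then show ?thesis by (rule total_rec_cong) (simp add: comp_def map_nth_upt)
qed

lemma partial_rec_mn0:
  assumes "total_rec (Suc n) f"
  shows "partial_rec n (\<lambda>xs. if \<exists>y. f (y # xs) = 0 then Some (LEAST y. f (y # xs) = 0) else None)"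
proof -
  obtain rf where rf: "\<forall>xs. length xs = Suc n \<longrightarrow> (\<forall>y. eval rf xs y \<longleftrightarrow> f xs = y)" using assms unfolding partial_rec_def by auto
  show ?thesis unfolding partial_rec_def
  proof (intro exI[of _ "Mn rf"] allI impI)
    fix xs :: "nat list" and y assume xs: "length xs = n"
    have e: "\<And>z v. eval rf (z # xs) v \<longleftrightarrow> f (z # xs) = v" using rf xs by simp
    show "eval (Mn rf) xs y \<longleftrightarrow> (if \<exists>y. f (y # xs) = 0 then Some (LEAST y. f (y # xs) = 0) else None) = Some y"
    proof
      assume "eval (Mn rf) xs y"
      then have h: "eval rf (y # xs) 0" "\<forall>z<y. \<exists>v. eval rf (z # xs) v \<and> v > 0" by (rule eval_MnE, blast)+
      then have a: "f (y # xs) = 0" "\<forall>z<y. f (z # xs) \<noteq> 0" using e by auto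
      then have "(LEAST y. f (y # xs) = 0) = y"
        by (intro Least_equality) (auto simp: not_less[symmetric])
      then show "(if \<exists>y. f (y # xs) = 0 then Some (LEAST y. f (y # xs) = 0) else None) = Some y" using a by auto
    next
      assume h: "(if \<exists>y. f (y # xs) = 0 then Some (LEAST y. f (y # xs) = 0) else None) = Some y"
      then have ex: "\<exists>y. f (y # xs) = 0" by (metis option.distinct(1))
      with h have y: "y = (LEAST y. f (y # xs) = 0)" by simp
      have "f (y # xs) = 0" using y ex by (metis (mono_tags, lifting) LeastI)
      moreover have "\<forall>z<y. f (z # xs) \<noteq> 0" using y not_less_Least by blast
      ultimately show "eval (Mn rf) xs y" using e by (intro ev_Mn) auto
    qed
  qed
qed

lemma total_rec_reidx:
  assumes "total_rec n f" "length idx = n" "\<forall>i\<in>set idx. i < m"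
  shows "total_rec m (\<lambda>ys. f (map (\<lambda>i. ys ! i) idx))"
proof -
  have "total_rec m (\<lambda>ys. f (map (\<lambda>g. g ys) (map (\<lambda>i ys. ys ! i) idx)))"
    by (rule total_rec_comp[OF assms(1)]) (use assms(2,3) in \<open>auto intro: total_rec_proj\<close>)
  then show ?thesis by (simp add: comp_def)
qed

lemma total_rec_drop:
  assumes "total_rec n a"
  shows "total_rec (m + n) (\<lambda>ys. a (drop m ys))"
proof -
  have "total_rec (m + n) (\<lambda>ys. a (map (\<lambda>i. ys ! i) (map (\<lambda>i. m + i) [0..<n])))"
    by (rule total_rec_reidx[OF assms]) auto
  then show ?thesis
  proof (rule total_rec_cong)
    fix ys :: "nat list" assume "length ys = m + n"
    then have "map (\<lambda>i. ys ! i) (map (\<lambda>i. m + i) [0..<n]) = drop m ys"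
      by (intro nth_equalityI) auto
    then show "a (map (\<lambda>i. ys ! i) (map (\<lambda>i. m + i) [0..<n])) = a (drop m ys)" by simp
  qed
qed

lemma total_rec_drop1: "total_rec n a \<Longrightarrow> total_rec (Suc n) (\<lambda>ys. a (tl ys))"
  using total_rec_drop[of n a 1] by (simp add: drop_Suc)

lemma total_rec_drop2: "total_rec n a \<Longrightarrow> total_rec (Suc (Suc n)) (\<lambda>ys. a (drop 2 ys))"
  using total_rec_drop[of n a 2] by simp

lemma rec_nat_Suc_eq_add: "rec_nat x (\<lambda>i acc. Suc acc) k = x + k"
  by (induction k) auto

lemma total_rec_add: "total_rec n a \<Longrightarrow> total_rec n b \<Longrightarrow> total_rec n (\<lambda>xs. a xs + b xs)"
  using total_rec_rec[of n b a "\<lambda>ys. Suc (ys ! 1)"] total_rec_Suc[OF total_rec_proj[of 1 "Suc (Suc n)"]]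
  by (simp add: rec_nat_Suc_eq_add)

lemma rec_nat_pred: "rec_nat 0 (\<lambda>i acc. i) k = k - 1"
  by (cases k) auto

lemma total_rec_pred: "total_rec n a \<Longrightarrow> total_rec n (\<lambda>xs. a xs - 1)"
  using total_rec_rec[of n a "\<lambda>xs. 0" "\<lambda>ys. ys ! 0"] total_rec_const total_rec_proj[of 0 "Suc (Suc n)"]
  by (simp add: rec_nat_pred)

lemma rec_nat_diff: "rec_nat x (\<lambda>i acc. acc - Suc 0) k = x - k"
  by (induction k) auto

lemma total_rec_sub: "total_rec n a \<Longrightarrow> total_rec n b \<Longrightarrow> total_rec n (\<lambda>xs. a xs - b xs)"
proof -
  assume a: "total_rec n a" and b: "total_rec n b"
  have "total_rec n (\<lambda>xs. rec_nat (a xs) (\<lambda>i acc. (i # acc # xs) ! 1 - 1) (b xs))"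
    by (intro total_rec_rec[OF b a] total_rec_pred total_rec_proj) simp
  then show ?thesis by (rule total_rec_cong) (simp add: rec_nat_diff)
qed


lemma rec_nat_mult: "rec_nat 0 (\<lambda>i acc. acc + x) k = k * x"
  by (induction k) auto

lemma total_rec_mult: "total_rec n a \<Longrightarrow> total_rec n b \<Longrightarrow> total_rec n (\<lambda>xs. a xs * b xs)"
proof -
  assume a: "total_rec n a" and b: "total_rec n b"
  have "total_rec (Suc (Suc n)) (\<lambda>ys. ys ! 1 + a (drop 2 ys))"
    by (rule total_rec_add[OF total_rec_proj total_rec_drop2[OF a]]) simp
  then have "total_rec n (\<lambda>xs. rec_nat 0 (\<lambda>i acc. (i # acc # xs) ! 1 + a (drop 2 (i # acc # xs))) (b xs))"
    by (intro total_rec_rec[OF b total_rec_const])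
  then show ?thesis by (rule total_rec_cong) (simp add: rec_nat_mult mult.commute)
qed

lemma rec_nat_const: "rec_nat x (\<lambda>i acc. y) k = (if k = 0 then x else y)"
  by (cases k) auto

lemma total_rec_ifz: "total_rec n c \<Longrightarrow> total_rec n a \<Longrightarrow> total_rec n b \<Longrightarrow> total_rec n (\<lambda>xs. if c xs = 0 then a xs else b xs)"
proof -
  assume c: "total_rec n c" and a: "total_rec n a" and b: "total_rec n b"
  have "total_rec n (\<lambda>xs. rec_nat (a xs) (\<lambda>i acc. b (drop 2 (i # acc # xs))) (c xs))"
    by (intro total_rec_rec[OF c a total_rec_drop2[OF b]])
  then show ?thesis by (rule total_rec_cong) (simp add: rec_nat_const)
qed

lemma total_rec_if: "total_rec n (\<lambda>xs. if P xs then 1 else 0) \<Longrightarrow> total_rec n a \<Longrightarrow> total_rec n b \<Longrightarrow> total_rec n (\<lambda>xs. if P xs then a xs else b xs)"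
proof -
  assume p: "total_rec n (\<lambda>xs. if P xs then 1 else 0)" and a: "total_rec n a" and b: "total_rec n b"
  have "total_rec n (\<lambda>xs. if (if P xs then 1 else 0) = (0::nat) then b xs else a xs)" by (rule total_rec_ifz[OF p b a])
  then show ?thesis by (rule total_rec_cong) simp
qed

lemma total_rec_if_le: "total_rec n a \<Longrightarrow> total_rec n b \<Longrightarrow> total_rec n (\<lambda>xs. if a xs \<le> b xs then 1 else 0)"
proof -
  assume a: "total_rec n a" and b: "total_rec n b"
  have "total_rec n (\<lambda>xs. if a xs - b xs = 0 then 1 else 0)" by (rule total_rec_ifz[OF total_rec_sub[OF a b] total_rec_const total_rec_const])
  then show ?thesis by (rule total_rec_cong) simp
qed

lemma total_rec_if_less: "total_rec n a \<Longrightarrow> total_rec n b \<Longrightarrow> total_rec n (\<lambda>xs. if a xs < b xs then 1 else 0)"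
  using total_rec_if_le[OF total_rec_Suc] by (simp add: Suc_le_eq)

lemma total_rec_if_eq: "total_rec n a \<Longrightarrow> total_rec n b \<Longrightarrow> total_rec n (\<lambda>xs. if a xs = b xs then 1 else 0)"
proof -
  assume a: "total_rec n a" and b: "total_rec n b"
  have "total_rec n (\<lambda>xs. if (a xs - b xs) + (b xs - a xs) = 0 then 1 else 0)"
    by (intro total_rec_ifz total_rec_add total_rec_sub a b total_rec_const)
  then show ?thesis by (rule total_rec_cong) auto
qed

lemma total_rec_if_not: "total_rec n (\<lambda>xs. if P xs then 1 else 0) \<Longrightarrow> total_rec n (\<lambda>xs. if \<not> P xs then 1 else 0)"
proof -
  assume p: "total_rec n (\<lambda>xs. if P xs then 1 else 0)"
  have "total_rec n (\<lambda>xs. if P xs then 0 else 1)" by (rule total_rec_if[OF p total_rec_const total_rec_const])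
  then show ?thesis by (rule total_rec_cong) simp
qed

lemma total_rec_if_and: "total_rec n (\<lambda>xs. if P xs then 1 else 0) \<Longrightarrow> total_rec n (\<lambda>xs. if Q xs then 1 else 0) \<Longrightarrow> total_rec n (\<lambda>xs. if P xs \<and> Q xs then 1 else 0)"
proof -
  assume p: "total_rec n (\<lambda>xs. if P xs then 1 else 0)" and q: "total_rec n (\<lambda>xs. if Q xs then 1 else 0)"
  have "total_rec n (\<lambda>xs. if P xs then (if Q xs then 1 else 0) else 0)" by (rule total_rec_if[OF p q total_rec_const])
  then show ?thesis by (rule total_rec_cong) simp
qed

lemma total_rec_if_or: "total_rec n (\<lambda>xs. if P xs then 1 else 0) \<Longrightarrow> total_rec n (\<lambda>xs. if Q xs then 1 else 0) \<Longrightarrow> total_rec n (\<lambda>xs. if P xs \<or> Q xs then 1 else 0)"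
proof -
  assume p: "total_rec n (\<lambda>xs. if P xs then 1 else 0)" and q: "total_rec n (\<lambda>xs. if Q xs then 1 else 0)"
  have "total_rec n (\<lambda>xs. if P xs then 1 else (if Q xs then 1 else 0))" by (rule total_rec_if[OF p total_rec_const q])
  then show ?thesis by (rule total_rec_cong) simp
qed



lemma rec_nat_power: "rec_nat (c::nat) (\<lambda>i acc. acc * x) k = c * x ^ k"
  by (induction k) (auto simp: power_Suc2)

lemma total_rec_pow: "total_rec n a \<Longrightarrow> total_rec n b \<Longrightarrow> total_rec n (\<lambda>xs. a xs ^ b xs)"
proof -
  assume a: "total_rec n a" and b: "total_rec n b"
  have "total_rec (Suc (Suc n)) (\<lambda>ys. ys ! 1 * a (drop 2 ys))"
    by (rule total_rec_mult[OF total_rec_proj total_rec_drop2[OF a]]) simp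
  then have "total_rec n (\<lambda>xs. rec_nat 1 (\<lambda>i acc. (i # acc # xs) ! 1 * a (drop 2 (i # acc # xs))) (b xs))"
    by (intro total_rec_rec[OF b total_rec_const])
  then show ?thesis by (rule total_rec_cong) (simp add: rec_nat_power)
qed

lemma partial_rec_Least:
  assumes "total_rec (Suc n) (\<lambda>ys. if P (hd ys) (tl ys) then 1 else 0)"
  shows "partial_rec n (\<lambda>xs. if \<exists>y. P y xs then Some (LEAST y. P y xs) else None)"
  using partial_rec_mn0[OF total_rec_if[OF assms total_rec_const[of _ 0] total_rec_const[of _ 1]]]
  by (rule partial_rec_cong) simp

lemma total_rec_Least:
  assumes "total_rec (Suc n) (\<lambda>ys. if P (hd ys) (tl ys) then 1 else 0)"
    and "\<And>xs. length xs = n \<Longrightarrow> \<exists>y. P y xs"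
  shows "total_rec n (\<lambda>xs. LEAST y. P y xs)"
  using partial_rec_Least[OF assms(1)] by (rule partial_rec_cong) (use assms(2) in auto)

lemma Least_div: "(b::nat) > 0 \<Longrightarrow> (LEAST q. a < Suc q * b) = a div b"
proof (rule Least_equality)
  assume "b > 0"
  show "a < Suc (a div b) * b" using \<open>b > 0\<close>
    by (metis add.commute div_mult_mod_eq mod_less_divisor mult_Suc nat_add_left_cancel_less)
  fix y assume "a < Suc y * b"
  then show "a div b \<le> y" using \<open>b > 0\<close>
    by (metis less_Suc_eq_le less_mult_imp_div_less)
qed

lemma less_add_mult: "0 < (b::nat) \<Longrightarrow> a < b + a * b"
  using mult_le_mono2[of 1 b "Suc a"] by simp

lemma total_rec_hd: "total_rec (Suc n) hd"
  by (rule total_rec_cong[OF total_rec_proj[of 0]]) (auto simp: length_Suc_conv)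

lemma total_rec_div: "total_rec n a \<Longrightarrow> total_rec n b \<Longrightarrow> total_rec n (\<lambda>xs. a xs div b xs)"
proof -
  assume a: "total_rec n a" and b: "total_rec n b"
  have "total_rec n (\<lambda>xs. LEAST q. b xs = 0 \<or> a xs < Suc q * b xs)"
  proof (rule total_rec_Least[where P = "\<lambda>q xs. b xs = 0 \<or> a xs < Suc q * b xs"])
    show "total_rec (Suc n) (\<lambda>ys. if b (tl ys) = 0 \<or> a (tl ys) < Suc (hd ys) * b (tl ys) then 1 else 0)"
      by (intro total_rec_if_or total_rec_if_eq total_rec_if_less total_rec_mult total_rec_Suc total_rec_drop1 a b
          total_rec_const total_rec_hd)
    fix xs show "\<exists>q. b xs = 0 \<or> a xs < Suc q * b xs"
      by (cases "b xs = 0") (auto intro!: exI[of _ "a xs"] simp: less_add_mult)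
  qed
  then show ?thesis
  proof (rule total_rec_cong)
    fix xs :: "nat list"
    show "(LEAST q. b xs = 0 \<or> a xs < Suc q * b xs) = a xs div b xs"
    proof (cases "b xs = 0")
      case True then show ?thesis by simp
    next
      case False then show ?thesis using Least_div[of "b xs" "a xs"] by simp
    qed
  qed
qed

lemma total_rec_mod: "total_rec n a \<Longrightarrow> total_rec n b \<Longrightarrow> total_rec n (\<lambda>xs. a xs mod b xs)"
proof -
  assume a: "total_rec n a" and b: "total_rec n b"
  have "total_rec n (\<lambda>xs. a xs - b xs * (a xs div b xs))" by (intro total_rec_sub total_rec_mult total_rec_div a b)
  then show ?thesis by (rule total_rec_cong) (simp add: minus_mult_div_eq_mod)
qed

lemma total_rec_sum:
  assumes k: "total_rec n k" and f: "total_rec (Suc n) f"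
  shows "total_rec n (\<lambda>xs. \<Sum>t<k xs. f (t # xs))"
proof -
  have f2: "total_rec (Suc (Suc n)) (\<lambda>ys. f (hd ys # drop 2 ys))"
  proof -
    have "total_rec (Suc (Suc n)) (\<lambda>ys. f (map (\<lambda>i. ys ! i) (0 # map (\<lambda>i. i + 2) [0..<n])))"
      by (rule total_rec_reidx[OF f]) auto
    then show ?thesis
    proof (rule total_rec_cong)
      fix ys :: "nat list" assume "length ys = Suc (Suc n)"
      then have "map (\<lambda>i. ys ! i) (0 # map (\<lambda>i. i + 2) [0..<n]) = hd ys # drop 2 ys"
        by (intro nth_equalityI) (auto simp: nth_Cons' length_Suc_conv)
      then show "f (map (\<lambda>i. ys ! i) (0 # map (\<lambda>i. i + 2) [0..<n])) = f (hd ys # drop 2 ys)" by simp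
    qed
  qed
  have "total_rec n (\<lambda>xs. rec_nat 0 (\<lambda>i acc. (i # acc # xs) ! 1 + f (hd (i # acc # xs) # drop 2 (i # acc # xs))) (k xs))"
    by (intro total_rec_rec[OF k total_rec_const] total_rec_add[OF total_rec_proj f2]) simp
  moreover have "\<And>xs m. rec_nat 0 (\<lambda>i acc. acc + f (i # xs)) m = (\<Sum>t<m. f (t # xs))"
    by (induct_tac m) auto
  ultimately show ?thesis by (elim total_rec_cong) simp
qed

lemma partial_rec_bind:
  assumes A: "partial_rec n A" and B: "partial_rec (Suc n) B"
  shows "partial_rec n (\<lambda>xs. case A xs of None \<Rightarrow> None | Some a \<Rightarrow> B (a # xs))"
proof -
  let ?Gs = "A # map (\<lambda>i xs. Some (xs ! i)) [0..<n]"
  have "partial_rec n (\<lambda>xs. if (\<forall>G\<in>set ?Gs. G xs \<noteq> None) then B (map (\<lambda>G. the (G xs)) ?Gs) else None)"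
    by (rule partial_rec_comp[OF B]) (use A in \<open>auto intro: total_rec_proj\<close>)
  then show ?thesis
  proof (rule partial_rec_cong)
    fix xs :: "nat list" assume "length xs = n"
    then show "(if (\<forall>G\<in>set ?Gs. G xs \<noteq> None) then B (map (\<lambda>G. the (G xs)) ?Gs) else None) =
       (case A xs of None \<Rightarrow> None | Some a \<Rightarrow> B (a # xs))"
      by (cases "A xs") (auto simp: comp_def map_nth_upt)
  qed
qed

section \<open>Clocked evaluation\<close>

text \<open>The state of a bounded \<open>\<mu>\<close>-search: \<open>0\<close> while all values seen are positive, \<open>1\<close> once a value is
  undefined, and \<open>y + 2\<close> once the least zero \<open>y\<close> has been found.\<close>

definition mu_state :: "(nat \<Rightarrow> nat option) \<Rightarrow> nat \<Rightarrow> nat" where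
  "mu_state P m = rec_nat 0 (\<lambda>z st. if st \<noteq> 0 then st else (case P z of None \<Rightarrow> 1 | Some v \<Rightarrow> if v = 0 then z + 2 else 0)) m"

lemma mu_state_0[simp]: "mu_state P 0 = 0" by (simp add: mu_state_def)
lemma mu_state_Suc: "mu_state P (Suc m) = (if mu_state P m \<noteq> 0 then mu_state P m else (case P m of None \<Rightarrow> 1 | Some v \<Rightarrow> if v = 0 then m + 2 else 0))"
  by (simp add: mu_state_def)

lemma mu_state_eq_0_iff: "mu_state P m = 0 \<longleftrightarrow> (\<forall>z<m. \<exists>v>0. P z = Some v)"
proof (induction m)
  case (Suc m)
  show ?case
  proof (cases "mu_state P m = 0")
    case True
    with Suc.IH have "\<forall>z<m. \<exists>v>0. P z = Some v" by simp
    then have "(\<forall>z<Suc m. \<exists>v>0. P z = Some v) \<longleftrightarrow> (\<exists>v>0. P m = Some v)"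
      by (auto simp: less_Suc_eq)
    moreover have "mu_state P (Suc m) = 0 \<longleftrightarrow> (\<exists>v>0. P m = Some v)"
      using True by (cases "P m") (auto simp: mu_state_Suc)
    ultimately show ?thesis by simp
  next
    case False
    then have "mu_state P (Suc m) \<noteq> 0" by (simp add: mu_state_Suc)
    moreover have "\<not> (\<forall>z<m. \<exists>v>0. P z = Some v)" using False Suc.IH by simp
    ultimately show ?thesis using less_SucI by blast
  qed
qed simp

lemma mu_state_eq_iff: "mu_state P m = y + 2 \<longleftrightarrow> (y < m \<and> P y = Some 0 \<and> (\<forall>z<y. \<exists>v>0. P z = Some v))"
proof (induction m)
  case (Suc m)
  show ?case
  proof (cases "mu_state P m = 0")
    case True
    then have "\<forall>z<m. \<exists>v>0. P z = Some v" by (simp add: mu_state_eq_0_iff)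
    then show ?thesis using True by (auto simp: mu_state_Suc less_Suc_eq split: option.splits)
  next
    case False
    then obtain z where "z < m" "\<not> (\<exists>v>0. P z = Some v)" by (auto simp: mu_state_eq_0_iff)
    then show ?thesis using False Suc.IH by (auto simp: mu_state_Suc less_Suc_eq; blast)
  qed
qed simp

text \<open>Evaluation in which the budget \<open>s\<close> bounds every \<open>\<mu>\<close>-search.\<close>

fun eval_clocked :: "recf \<Rightarrow> nat \<Rightarrow> nat list \<Rightarrow> nat option" where
  "eval_clocked Z s xs = Some 0"
| "eval_clocked S s xs = (case xs of [] \<Rightarrow> None | x # _ \<Rightarrow> Some (Suc x))"
| "eval_clocked (Proj i) s xs = Some (if i < length xs then xs ! i else 0)"
| "eval_clocked (Comp f gs) s xs = (if None \<in> set (map (\<lambda>g. eval_clocked g s xs) gs) then None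
     else eval_clocked f s (map (\<lambda>g. the (eval_clocked g s xs)) gs))"
| "eval_clocked (Prec f g) s xs = (case xs of [] \<Rightarrow> None | k # ys \<Rightarrow>
     rec_nat (eval_clocked f s ys) (\<lambda>i acc. case acc of None \<Rightarrow> None | Some a \<Rightarrow> eval_clocked g s (i # a # ys)) k)"
| "eval_clocked (Mn f) s xs = (let st = mu_state (\<lambda>z. eval_clocked f s (z # xs)) s in if st \<ge> 2 then Some (st - 2) else None)"

lemma mu_state_ge_2: "mu_state P m \<ge> 2 \<Longrightarrow> \<exists>y. mu_state P m = y + 2"
  by (metis add.commute le_add_diff_inverse2)

lemma eval_clocked_Mn_Some: "eval_clocked (Mn f) s xs = Some y \<longleftrightarrow> (y < s \<and> eval_clocked f s (y # xs) = Some 0 \<and> (\<forall>z<y. \<exists>v>0. eval_clocked f s (z # xs) = Some v))"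
proof -
  have "eval_clocked (Mn f) s xs = Some y \<longleftrightarrow> mu_state (\<lambda>z. eval_clocked f s (z # xs)) s = y + 2"
    by (auto simp: Let_def dest: mu_state_ge_2)
  then show ?thesis using mu_state_eq_iff[of "\<lambda>z. eval_clocked f s (z # xs)" s y] by simp
qed

lemma eval_clocked_Prec_Suc: "eval_clocked (Prec f g) s (Suc k # ys) = (case eval_clocked (Prec f g) s (k # ys) of None \<Rightarrow> None | Some a \<Rightarrow> eval_clocked g s (k # a # ys))"
  by simp

lemma eval_clocked_Prec_0: "eval_clocked (Prec f g) s (0 # ys) = eval_clocked f s ys"
  by simp

declare eval_clocked.simps(5)[simp del]

lemma eval_clocked_mono: "eval_clocked r s xs = Some y \<Longrightarrow> s \<le> s' \<Longrightarrow> eval_clocked r s' xs = Some y"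
proof (induction r arbitrary: xs y)
  case Z then show ?case by simp
next
  case S then show ?case by simp
next
  case (Proj i) then show ?case by simp
next
  case (Comp f gs)
  from Comp.prems have nn: "None \<notin> set (map (\<lambda>g. eval_clocked g s xs) gs)" by (auto split: if_splits)
  then have eq: "\<forall>g\<in>set gs. eval_clocked g s' xs = eval_clocked g s xs"
    using Comp.IH(2) Comp.prems(2) by (metis (no_types, lifting) image_eqI list.set_map option.exhaust)
  then have "map (\<lambda>g. eval_clocked g s' xs) gs = map (\<lambda>g. eval_clocked g s xs) gs" by simp
  moreover have "map (\<lambda>g. the (eval_clocked g s' xs)) gs = map (\<lambda>g. the (eval_clocked g s xs)) gs" using eq by simp
  moreover have "eval_clocked f s (map (\<lambda>g. the (eval_clocked g s xs)) gs) = Some y" using Comp.prems(1) nn by simp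
  then have "eval_clocked f s' (map (\<lambda>g. the (eval_clocked g s xs)) gs) = Some y" using Comp.IH(1) Comp.prems(2) by blast
  ultimately show ?case using nn by (simp only: eval_clocked.simps if_False) 
next
  case (Prec f g)
  show ?case
  proof (cases xs)
    case Nil then show ?thesis using Prec.prems by (simp add: eval_clocked.simps(5))
  next
    case (Cons k ys)
    have "\<forall>y. eval_clocked (Prec f g) s (k # ys) = Some y \<longrightarrow> eval_clocked (Prec f g) s' (k # ys) = Some y"
    proof (induction k)
      case 0 then show ?case using Prec.IH(1) Prec.prems(2) by (simp add: eval_clocked_Prec_0)
    next
      case (Suc k)
      then show ?case using Prec.IH(2) Prec.prems(2) by (auto simp: eval_clocked_Prec_Suc split: option.splits)
    qed
    then show ?thesis using Prec.prems(1) Cons by blast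
  qed
next
  case (Mn f)
  then show ?case unfolding eval_clocked_Mn_Some by (meson less_le_trans)
qed

lemma common_clock:
  fixes m :: nat and Q :: "nat \<Rightarrow> nat \<Rightarrow> bool"
  assumes "\<forall>k<m. \<exists>s. Q k s" and "\<And>k s s'. Q k s \<Longrightarrow> s \<le> s' \<Longrightarrow> Q k s'"
  shows "\<exists>s. \<forall>k<m. Q k s"
  using assms(1)
proof (induction m)
  case 0 then show ?case by simp
next
  case (Suc m)
  then obtain s0 where s0: "\<forall>k<m. Q k s0" by auto
  obtain s1 where s1: "Q m s1" using Suc.prems by auto
  have "\<forall>k<Suc m. Q k (max s0 s1)"
    using s0 s1 assms(2) by (metis less_Suc_eq max.cobounded1 max.cobounded2)
  then show ?case by blast
qed

lemma eval_clocked_sound: "eval_clocked r s xs = Some y \<Longrightarrow> eval r xs y"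
proof (induction r arbitrary: xs y)
  case Z then show ?case by (simp add: ev_Z)
next
  case S then show ?case by (cases xs) (auto intro: ev_S)
next
  case (Proj i) then show ?case by (metis ev_Proj eval_clocked.simps(3) option.inject)
next
  case (Comp f gs)
  from Comp.prems have nn: "None \<notin> set (map (\<lambda>g. eval_clocked g s xs) gs)" by (auto split: if_splits)
  let ?ys = "map (\<lambda>g. the (eval_clocked g s xs)) gs"
  have fy: "eval_clocked f s ?ys = Some y" using Comp.prems nn by simp
  have "\<forall>k<length gs. eval (gs ! k) xs (?ys ! k)"
  proof (intro allI impI)
    fix k assume k: "k < length gs"
    have "eval_clocked (gs ! k) s xs \<noteq> None"
    proof
      assume a: "eval_clocked (gs ! k) s xs = None"
      have "None \<in> (\<lambda>g. eval_clocked g s xs) ` set gs" by (rule image_eqI[where x="gs ! k"]) (use a nth_mem[OF k] in auto)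
      then show False using nn by simp
    qed
    then have "eval_clocked (gs ! k) s xs = Some (?ys ! k)" using k by auto
    then show "eval (gs ! k) xs (?ys ! k)" using Comp.IH(2) k nth_mem by blast
  qed
  moreover have "eval f ?ys y" using Comp.IH(1) fy by blast
  ultimately show ?case by (intro ev_Comp) auto
next
  case (Prec f g)
  obtain k ys where xs: "xs = k # ys" using Prec.prems by (cases xs) (auto simp: eval_clocked.simps(5))
  have "\<forall>y. eval_clocked (Prec f g) s (k # ys) = Some y \<longrightarrow> eval (Prec f g) (k # ys) y"
  proof (induction k)
    case 0 then show ?case using Prec.IH(1) by (auto simp: eval_clocked_Prec_0 intro: ev_Prec0)
  next
    case (Suc k)
    show ?case
    proof (intro allI impI)
      fix y assume "eval_clocked (Prec f g) s (Suc k # ys) = Some y"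
      then obtain a where a: "eval_clocked (Prec f g) s (k # ys) = Some a" "eval_clocked g s (k # a # ys) = Some y"
        by (auto simp: eval_clocked_Prec_Suc split: option.splits)
      then show "eval (Prec f g) (Suc k # ys) y" using Suc.IH Prec.IH(2) by (blast intro: ev_PrecS)
    qed
  qed
  then show ?case using Prec.prems xs by blast
next
  case (Mn f)
  then have h: "eval_clocked f s (y # xs) = Some 0" "\<forall>z<y. \<exists>v>0. eval_clocked f s (z # xs) = Some v"
    unfolding eval_clocked_Mn_Some by auto
  show ?case
  proof (rule ev_Mn)
    show "eval f (y # xs) 0" using h(1) Mn.IH by blast
    show "\<forall>z<y. \<exists>v. eval f (z # xs) v \<and> v > 0" using h(2) Mn.IH by blast
  qed
qed

lemma eval_clocked_complete: "eval r xs y \<Longrightarrow> \<exists>s. eval_clocked r s xs = Some y"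
proof (induction r arbitrary: xs y)
  case Z then show ?case by (auto elim!: eval_ZE)
next
  case S from S.prems show ?case by (rule eval_SE) simp
next
  case (Proj i) from Proj.prems show ?case by (rule eval_ProjE) simp
next
  case (Comp f gs)
  from Comp.prems obtain ys where h: "length ys = length gs" "\<forall>k<length gs. eval (gs ! k) xs (ys ! k)" "eval f ys y"
    by (rule eval_CompE)
  have "\<forall>k<length gs. \<exists>s. eval_clocked (gs ! k) s xs = Some (ys ! k)"
    using h(2) Comp.IH(2) nth_mem by blast
  then obtain s1 where s1: "\<forall>k<length gs. eval_clocked (gs ! k) s1 xs = Some (ys ! k)"
    using common_clock[of "length gs" "\<lambda>k s. eval_clocked (gs ! k) s xs = Some (ys ! k)"] eval_clocked_mono by blast
  obtain s2 where s2: "eval_clocked f s2 ys = Some y" using Comp.IH(1) h(3) by blast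
  let ?s = "max s1 s2"
  have a: "\<forall>k<length gs. eval_clocked (gs ! k) ?s xs = Some (ys ! k)" using s1 eval_clocked_mono by (meson max.cobounded1)
  have nn: "None \<notin> set (map (\<lambda>g. eval_clocked g ?s xs) gs)" using a by (auto simp: in_set_conv_nth)
  have m: "map (\<lambda>g. the (eval_clocked g ?s xs)) gs = ys" using a h(1) by (intro nth_equalityI) auto
  have "eval_clocked f ?s ys = Some y" using s2 eval_clocked_mono by (meson max.cobounded2)
  then show ?case using nn m by (intro exI[of _ ?s]) (simp only: eval_clocked.simps if_False)
next
  case (Prec f g)
  from Prec.prems obtain k ys where xs: "xs = k # ys" by (rule eval_PrecE) auto
  have "\<forall>y. eval (Prec f g) (k # ys) y \<longrightarrow> (\<exists>s. eval_clocked (Prec f g) s (k # ys) = Some y)"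
  proof (induction k)
    case 0 then show ?case using Prec.IH(1) by (auto simp: eval_clocked_Prec_0 elim!: eval_Prec0E)
  next
    case (Suc k)
    show ?case
    proof (intro allI impI)
      fix y assume "eval (Prec f g) (Suc k # ys) y"
      then obtain a where a: "eval (Prec f g) (k # ys) a" "eval g (k # a # ys) y" by (rule eval_PrecSE)
      obtain s1 where s1: "eval_clocked (Prec f g) s1 (k # ys) = Some a" using Suc.IH a(1) by blast
      obtain s2 where s2: "eval_clocked g s2 (k # a # ys) = Some y" using Prec.IH(2) a(2) by blast
      have "eval_clocked (Prec f g) (max s1 s2) (k # ys) = Some a" using s1 eval_clocked_mono by (meson max.cobounded1)
      moreover have "eval_clocked g (max s1 s2) (k # a # ys) = Some y" using s2 eval_clocked_mono by (meson max.cobounded2)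
      ultimately show "\<exists>s. eval_clocked (Prec f g) s (Suc k # ys) = Some y" by (intro exI[of _ "max s1 s2"]) (simp add: eval_clocked_Prec_Suc)
    qed
  qed
  then show ?case using Prec.prems xs by blast
next
  case (Mn f)
  from Mn.prems have zero: "eval f (y # xs) 0" and pos: "\<forall>z<y. \<exists>v. eval f (z # xs) v \<and> v > 0"
    by (rule eval_MnE, blast)+
  let ?Q = "\<lambda>z s. \<exists>v. eval f (z # xs) v \<and> eval_clocked f s (z # xs) = Some v"
  have "\<forall>z<Suc y. \<exists>s. ?Q z s"
  proof (intro allI impI)
    fix z assume "z < Suc y"
    then obtain v where "eval f (z # xs) v" using zero pos by (metis less_Suc_eq)
    then show "\<exists>s. ?Q z s" using Mn.IH by blast
  qed
  then obtain s where s: "\<forall>z<Suc y. ?Q z s"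
    using common_clock[of "Suc y" ?Q] eval_clocked_mono by blast
  have clocked: "eval_clocked f (max s (Suc y)) (z # xs) = Some v" if "z \<le> y" "eval f (z # xs) v" for z v
    using s that eval_deterministic eval_clocked_mono[of f s "z # xs" _ "max s (Suc y)"]
    by (metis le_imp_less_Suc max.cobounded1)
  have "eval_clocked (Mn f) (max s (Suc y)) xs = Some y"
    unfolding eval_clocked_Mn_Some using clocked zero pos by (auto intro: less_imp_le)
  then show ?case by blast
qed

lemma eval_iff_eval_clocked: "eval r xs y \<longleftrightarrow> (\<exists>s. eval_clocked r s xs = Some y)"
  using eval_clocked_complete eval_clocked_sound by blast

fun opt_code :: "nat option \<Rightarrow> nat" where
  "opt_code None = 0" | "opt_code (Some y) = Suc y"

lemma opt_code_eq_0_iff: "opt_code x = 0 \<longleftrightarrow> x = None" by (cases x) auto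

lemma map_nth_drop: "map (\<lambda>i. ws ! i) [k..<length ws] = drop k ws"
  by (intro nth_equalityI) auto

lemma total_rec_if_allpos: "\<forall>g\<in>set gs. total_rec n g \<Longrightarrow> total_rec n (\<lambda>xs. if \<forall>g\<in>set gs. 0 < g xs then 1 else 0)"
proof (induction gs)
  case Nil then show ?case by (simp add: total_rec_const)
next
  case (Cons g gs)
  then have "total_rec n (\<lambda>xs. if 0 < g xs \<and> (\<forall>g\<in>set gs. 0 < g xs) then 1 else 0)"
    by (intro total_rec_if_and total_rec_if_less total_rec_const) auto
  then show ?case by simp
qed

lemma total_rec_projs_from: "\<forall>g\<in>set (map (\<lambda>i ws. ws ! i) [k..<m]). total_rec m g"
  by (auto intro: total_rec_proj)

lemma opt_code_rec_nat: "opt_code (rec_nat (eval_clocked f s zs) (\<lambda>i acc. case acc of None \<Rightarrow> None | Some a \<Rightarrow> eval_clocked g s (i # a # zs)) k)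
  = rec_nat (opt_code (eval_clocked f s zs)) (\<lambda>i acc. if acc = 0 then 0 else opt_code (eval_clocked g s (i # (acc - 1) # zs))) k"
proof (induction k)
  case 0 then show ?case by simp
next
  case (Suc k)
  show ?case
  proof (cases "rec_nat (eval_clocked f s zs) (\<lambda>i acc. case acc of None \<Rightarrow> None | Some a \<Rightarrow> eval_clocked g s (i # a # zs)) k")
    case None then show ?thesis using Suc.IH by simp
  next
    case (Some a)
    then have "rec_nat (opt_code (eval_clocked f s zs)) (\<lambda>i acc. if acc = 0 then 0 else opt_code (eval_clocked g s (i # (acc - 1) # zs))) k = Suc a"
      using Suc.IH by simp
    then show ?thesis using Some by simp
  qed
qed

lemma mu_state_opt_code: "mu_state P m = rec_nat 0 (\<lambda>z st. if st = 0 then (if opt_code (P z) = 0 then 1 else if opt_code (P z) = 1 then z + 2 else 0) else st) m"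
proof -
  have "(\<lambda>z st. if st \<noteq> 0 then st else (case P z of None \<Rightarrow> 1 | Some v \<Rightarrow> if v = 0 then z + 2 else 0))
      = (\<lambda>z st. if st = 0 then (if opt_code (P z) = 0 then 1 else if opt_code (P z) = 1 then z + 2 else 0) else st)"
    by (intro ext) (auto split: option.splits)
  then show ?thesis unfolding mu_state_def by simp
qed

lemma mu_state_result: "mu_state P s = R \<Longrightarrow> (if 2 \<le> R then R - 1 else 0) = opt_code (let st = mu_state P s in if 2 \<le> st then Some (st - 2) else None)"
  by (auto simp: Let_def)

abbreviation clocked :: "recf \<Rightarrow> nat list \<Rightarrow> nat" where
  "clocked r ys \<equiv> opt_code (eval_clocked r (hd ys) (tl ys))"

lemma total_rec_clocked_Comp:
  assumes IH_f: "total_rec (Suc (length gs)) (clocked f)"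
    and IH_gs: "\<And>g. g \<in> set gs \<Longrightarrow> total_rec (Suc n) (clocked g)"
  shows "total_rec (Suc n) (clocked (Comp f gs))"
proof -
  have Cg: "\<forall>g\<in>set (map clocked gs). total_rec (Suc n) g" using IH_gs by auto
  have Cg1: "\<forall>g\<in>set (hd # map (\<lambda>g ys. clocked g ys - 1) gs). total_rec (Suc n) g"
  proof -
    have "\<forall>g\<in>set gs. total_rec (Suc n) (\<lambda>ys. clocked g ys - 1)"
    proof
      fix g assume "g \<in> set gs"
      show "total_rec (Suc n) (\<lambda>ys. clocked g ys - 1)" by (rule total_rec_pred) (use IH_gs \<open>g \<in> set gs\<close> in blast)
    qed
    then show ?thesis using total_rec_hd by auto
  qed
  have t1: "total_rec (Suc n) (\<lambda>ys. clocked f (map (\<lambda>g. g ys) (hd # map (\<lambda>g ys. clocked g ys - 1) gs)))"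
    by (rule total_rec_comp[OF IH_f _ Cg1]) simp
  have "total_rec (Suc n) (\<lambda>ys. if \<forall>g\<in>set (map clocked gs). 0 < g ys then clocked f (map (\<lambda>g. g ys) (hd # map (\<lambda>g ys. clocked g ys - 1) gs)) else 0)"
    by (rule total_rec_if[OF total_rec_if_allpos[OF Cg] t1 total_rec_const])
  then show ?thesis
  proof (rule total_rec_cong)
    fix ys :: "nat list" assume "length ys = Suc n"
    then obtain s xs where ys: "ys = s # xs" by (cases ys) auto
    show "(if \<forall>g\<in>set (map clocked gs). 0 < g ys then clocked f (map (\<lambda>g. g ys) (hd # map (\<lambda>g ys. clocked g ys - 1) gs)) else 0)
        = clocked (Comp f gs) ys"
    proof (cases "None \<in> set (map (\<lambda>g. eval_clocked g s xs) gs)")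
      case True
      then obtain g where "g \<in> set gs" "eval_clocked g s xs = None" by auto
      then show ?thesis using True ys by auto
    next
      case False
      then have "\<forall>g\<in>set gs. eval_clocked g s xs \<noteq> None" by (metis image_eqI list.set_map)
      then have pos: "\<forall>g\<in>set (map clocked gs). 0 < g ys" and
        m: "map (\<lambda>g. opt_code (eval_clocked g s xs) - 1) gs = map (\<lambda>g. the (eval_clocked g s xs)) gs"
        using ys by (auto simp: opt_code_eq_0_iff)
      have m': "map (\<lambda>x. opt_code (eval_clocked x s xs) - Suc 0) gs = map (\<lambda>g. the (eval_clocked g s xs)) gs"
        using m by simp
      show ?thesis using False ys pos by (simp add: comp_def m' del: map_eq_conv)
    qed
  qed
qed

lemma map_apply_projs: "length ws = m \<Longrightarrow> map (\<lambda>g. g ws) (map (\<lambda>i ws. ws ! i) [k..<m]) = drop k ws"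
  using map_nth_drop[of ws k] by (simp add: comp_def)

lemma total_rec_clocked_Prec:
  assumes IH_f: "\<And>n. total_rec (Suc n) (clocked f)" and IH_g: "\<And>n. total_rec (Suc n) (clocked g)"
  shows "total_rec (Suc n) (clocked (Prec f g))"
proof (cases n)
  case 0
  show ?thesis
    by (rule total_rec_cong[OF total_rec_const[of _ 0]])
      (use 0 in \<open>auto simp: length_Suc_conv eval_clocked.simps(5)\<close>)
next
  case (Suc n')
  let ?base = "hd # map (\<lambda>i ws. ws ! i) [2..<Suc n]"
  let ?args = "[\<lambda>ws. ws ! 2, \<lambda>ws. ws ! 0, \<lambda>ws. ws ! 1 - 1] @ map (\<lambda>i ws. ws ! i) [4..<Suc (Suc (Suc n))]"
  let ?step = "\<lambda>ws. if ws ! 1 = 0 then 0 else clocked g (map (\<lambda>g. g ws) ?args)"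
  have base: "total_rec (Suc n) (\<lambda>ys. clocked f (map (\<lambda>g. g ys) ?base))"
    by (rule total_rec_comp[OF IH_f]) (use Suc total_rec_hd in \<open>auto intro: total_rec_proj\<close>)
  have rec_g: "total_rec (Suc (Suc (Suc n))) (\<lambda>ws. clocked g (map (\<lambda>g. g ws) ?args))"
    by (rule total_rec_comp[OF IH_g])
      (use Suc total_rec_projs_from total_rec_pred[OF total_rec_proj[of 1 "Suc (Suc (Suc n))"]] in
        \<open>auto simp del: upt_Suc intro: total_rec_proj\<close>)
  have step: "total_rec (Suc (Suc (Suc n))) ?step"
    by (rule total_rec_if[OF total_rec_if_eq[OF total_rec_proj total_rec_const] total_rec_const rec_g]) simp
  have "total_rec (Suc n) (\<lambda>ys. rec_nat (clocked f (map (\<lambda>g. g ys) ?base)) (\<lambda>i acc. ?step (i # acc # ys)) (ys ! 1))"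
    by (rule total_rec_rec[OF total_rec_proj base step]) (simp add: Suc)
  then show ?thesis
  proof (rule total_rec_cong)
    fix ys :: "nat list" assume len: "length ys = Suc n"
    then obtain s k zs where ys: "ys = s # k # zs" using Suc by (auto simp: length_Suc_conv)
    have "map (\<lambda>g. g ys) ?base = s # zs"
      using map_apply_projs[of ys "Suc n" 2] len ys by (simp del: upt_Suc add: numeral_eq_Suc)
    moreover have "map (\<lambda>g. g (i # acc # ys)) ?args = s # i # (acc - 1) # zs" for i acc
      using map_apply_projs[of "i # acc # ys" "Suc (Suc (Suc n))" 4] len ys
      by (simp del: upt_Suc add: numeral_eq_Suc)
    ultimately show "rec_nat (clocked f (map (\<lambda>g. g ys) ?base)) (\<lambda>i acc. ?step (i # acc # ys)) (ys ! 1)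
        = clocked (Prec f g) ys"
      using ys by (simp add: eval_clocked.simps(5) opt_code_rec_nat cong: if_cong)
  qed
qed

lemma total_rec_clocked_Mn:
  assumes IH_f: "\<And>n. total_rec (Suc n) (clocked f)"
  shows "total_rec (Suc n) (clocked (Mn f))"
proof -
  let ?args = "[\<lambda>ws. ws ! 2, \<lambda>ws. ws ! 0] @ map (\<lambda>i ws. ws ! i) [3..<Suc (Suc (Suc n))]"
  let ?v = "\<lambda>ws. clocked f (map (\<lambda>g. g ws) ?args)"
  let ?step = "\<lambda>ws. if ws ! 1 = 0 then (if ?v ws = 0 then 1 else if ?v ws = 1 then ws ! 0 + 2 else 0) else ws ! 1"
  let ?state = "\<lambda>ys. rec_nat 0 (\<lambda>i acc. ?step (i # acc # ys)) (hd ys)"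
  have "total_rec (Suc (Suc (Suc n))) ?v"
    by (rule total_rec_comp[OF IH_f])
      (use total_rec_projs_from in \<open>auto simp del: upt_Suc intro: total_rec_proj\<close>)
  then have "total_rec (Suc (Suc (Suc n))) ?step"
    by (intro total_rec_if[OF total_rec_if_eq[OF total_rec_proj total_rec_const]]
        total_rec_if[OF total_rec_if_eq[OF _ total_rec_const]] total_rec_const total_rec_add total_rec_proj) simp_all
  then have state: "total_rec (Suc n) ?state"
    by (rule total_rec_rec[OF total_rec_hd total_rec_const])
  have "total_rec (Suc n) (\<lambda>ys. if 2 \<le> ?state ys then ?state ys - 1 else 0)"
    by (rule total_rec_if[OF total_rec_if_le[OF total_rec_const state] total_rec_pred[OF state] total_rec_const])
  then show ?thesis
  proof (rule total_rec_cong)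
    fix ys :: "nat list" assume len: "length ys = Suc n"
    then obtain s xs where ys: "ys = s # xs" by (cases ys) auto
    have "map (\<lambda>g. g (i # acc # ys)) ?args = s # i # xs" for i acc
      using map_apply_projs[of "i # acc # ys" "Suc (Suc (Suc n))" 3] len ys
      by (simp del: upt_Suc add: numeral_eq_Suc)
    then have "mu_state (\<lambda>z. eval_clocked f s (z # xs)) s = ?state ys"
      unfolding ys mu_state_opt_code by (simp cong: if_cong)
    then show "(if 2 \<le> ?state ys then ?state ys - 1 else 0) = clocked (Mn f) ys"
      using mu_state_result ys by (simp only: list.sel eval_clocked.simps)
  qed
qed

theorem total_rec_clocked: "total_rec (Suc n) (clocked r)"
proof (induction r arbitrary: n)
  case Z
  show ?case by (rule total_rec_cong[OF total_rec_const[of _ 1]]) simp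
next
  case S
  show ?case
  proof (cases n)
    case 0
    show ?thesis by (rule total_rec_cong[OF total_rec_const[of _ 0]]) (use 0 in \<open>auto simp: length_Suc_conv\<close>)
  next
    case (Suc n')
    show ?thesis
      by (rule total_rec_cong[OF total_rec_Suc[OF total_rec_Suc[OF total_rec_proj[of 1]]]]) (use Suc in \<open>auto simp: length_Suc_conv\<close>)
  qed
next
  case (Proj i)
  show ?case
  proof (cases "i < n")
    case True
    show ?thesis
      by (rule total_rec_cong[OF total_rec_Suc[OF total_rec_proj[of "Suc i"]]]) (use True in \<open>auto simp: length_Suc_conv\<close>)
  next
    case False
    show ?thesis
      by (rule total_rec_cong[OF total_rec_const[of _ 1]]) (use False in \<open>auto simp: length_Suc_conv\<close>)
  qed
next
  case (Comp f gs)
  then show ?case by (intro total_rec_clocked_Comp) auto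
next
  case (Prec f g)
  then show ?case by (rule total_rec_clocked_Prec)
next
  case (Mn f)
  then show ?case by (rule total_rec_clocked_Mn)
qed

lemma enc_Cons_Suc: "enc (b # bs) + 1 = 2 * (enc bs + 1) + (if b then 1 else 0)"
  by simp

lemma enc_bounds: "2 ^ length p \<le> enc p + 1 \<and> enc p + 1 < 2 ^ Suc (length p)"
proof (induction p)
  case Nil then show ?case by simp
next
  case (Cons b bs)
  then show ?case unfolding enc_Cons_Suc by auto
qed

lemma enc_inj: "enc p = enc q \<Longrightarrow> p = q"
proof (induction p arbitrary: q)
  case Nil then show ?case by (cases q) (auto split: if_splits)
next
  case (Cons b bs)
  obtain a list where q: "q = a # list" using Cons.prems by (cases q) (auto split: if_splits)
  have e: "2 * enc bs + (if b then 2 else 1) = 2 * enc list + (if a then (2::nat) else 1)" using Cons.prems q by simp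
  have ab: "a = b"
  proof (rule ccontr)
    assume "a \<noteq> b"
    then have "odd (2 * enc bs + (if b then 2 else 1)) \<noteq> odd (2 * enc list + (if a then (2::nat) else 1))"
      by (cases a; cases b) simp_all
    then show False using e by simp
  qed
  then have "enc bs = enc list" using e by simp
  then show ?case using Cons.IH q ab by simp
qed

fun dec :: "nat \<Rightarrow> bool list" where
  "dec 0 = []"
| "dec (Suc m) = (if even m then False # dec (m div 2) else True # dec (m div 2))"

lemma enc_dec[simp]: "enc (dec m) = m"
proof (induction m rule: dec.induct)
  case 1 then show ?case by simp
next
  case (2 m)
  then show ?case by (auto elim: oddE)
qed

lemma dec_enc[simp]: "dec (enc p) = p"
  using enc_inj enc_dec by metis

lemma enc_append: "enc (p @ q) = enc p + 2 ^ length p * enc q"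
  by (induction p) (auto simp: algebra_simps)

lemma enc_drop: "enc (drop i p) = (enc p + 1) div 2 ^ i - 1"
proof (induction p arbitrary: i)
  case Nil then show ?case by (cases i) auto
next
  case (Cons b bs)
  show ?case
  proof (cases i)
    case 0 then show ?thesis by simp
  next
    case (Suc j)
    have "(enc (b # bs) + 1) div 2 ^ i = ((enc (b # bs) + 1) div 2) div 2 ^ j" using Suc by (simp add: div_mult2_eq)
    also have "(enc (b # bs) + 1) div 2 = enc bs + 1" unfolding enc_Cons_Suc by auto
    finally show ?thesis using Suc Cons.IH by simp
  qed
qed

lemma enc_take: "i \<le> length p \<Longrightarrow> enc (take i p) = (enc p + 1) mod 2 ^ i + 2 ^ i - 1"
proof (induction p arbitrary: i)
  case Nil then show ?case by simp
next
  case (Cons b bs)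
  show ?case
  proof (cases i)
    case 0 then show ?thesis by simp
  next
    case (Suc j)
    then have j: "j \<le> length bs" using Cons.prems by simp
    have m: "(enc (b # bs) + 1) mod 2 ^ i = 2 * ((enc bs + 1) mod 2 ^ j) + (if b then 1 else 0)"
      unfolding enc_Cons_Suc Suc by (simp add: mod_mult2_eq)
    have p: "(1::nat) \<le> 2 ^ j" by simp
    have "enc (take i (b # bs)) = 2 * enc (take j bs) + (if b then 2 else 1)" using Suc by simp
    also have "\<dots> = 2 * ((enc bs + 1) mod 2 ^ j + 2 ^ j - 1) + (if b then 2 else 1)" using Cons.IH[OF j] by simp
    also have "\<dots> = (enc (b # bs) + 1) mod 2 ^ i + 2 ^ i - 1" unfolding m using Suc by (cases b; simp; insert p; arith)
    finally show ?thesis .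
  qed
qed

lemma length_enc_least: "length p = (LEAST L. enc p + 1 < 2 ^ Suc L)"
proof (rule Least_equality[symmetric])
  show "enc p + 1 < 2 ^ Suc (length p)" using enc_bounds by blast
  fix L assume "enc p + 1 < 2 ^ Suc L"
  then have "2 ^ length p < (2::nat) ^ Suc L" using enc_bounds[of p] by linarith
  then have "length p < Suc L" using power_strict_increasing_iff[of "2::nat" "length p" "Suc L"] by simp
  then show "length p \<le> L" by simp
qed

definition bit_length :: "nat \<Rightarrow> nat" where "bit_length m = length (dec m)"


lemma bit_length_mono: "x \<le> y \<Longrightarrow> bit_length x \<le> bit_length y"
proof -
  assume xy: "x \<le> y"
  have lx: "bit_length x = (LEAST L. x + 1 < 2 ^ Suc L)" using length_enc_least[of "dec x"] by (simp add: bit_length_def)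
  have ly: "bit_length y = (LEAST L. y + 1 < 2 ^ Suc L)" using length_enc_least[of "dec y"] by (simp add: bit_length_def)
  have "y + 1 < 2 ^ Suc (bit_length y)" using enc_bounds[of "dec y"] by (simp add: bit_length_def)
  then have "x + 1 < 2 ^ Suc (bit_length y)" using xy by linarith
  then show ?thesis unfolding lx by (rule Least_le)
qed

lemma bit_length_Suc_le: "bit_length (Suc n) \<le> Suc (bit_length n)"
proof -
  have "Suc n + 1 < 2 ^ Suc (Suc (bit_length n))"
    using enc_bounds[of "dec n"] by (simp add: bit_length_def)
  then show ?thesis
    using length_enc_least[of "dec (Suc n)"] by (simp add: bit_length_def Least_le)
qed

lemma bit_length_add_le: "bit_length (n + c) \<le> bit_length n + c"
proof (induction c)
  case (Suc c)
  then show ?case using bit_length_Suc_le[of "n + c"] by simp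
qed simp

lemma real_bit_length_le_log: "real (bit_length n) \<le> log 2 (real n + 1)"
proof -
  have "2 ^ bit_length n \<le> n + 1"
    using enc_bounds[of "dec n"] by (simp add: bit_length_def)
  then have "real (2 ^ bit_length n) \<le> real n + 1"
    by (metis of_nat_Suc of_nat_le_iff Suc_eq_plus1 add.commute)
  then show ?thesis by (simp add: le_log_iff powr_realpow)
qed

lemma total_rec_bit_length: "total_rec n a \<Longrightarrow> total_rec n (\<lambda>xs. bit_length (a xs))"
proof -
  assume a: "total_rec n a"
  have "total_rec n (\<lambda>xs. LEAST L. a xs + 1 < 2 ^ Suc L)"
  proof (rule total_rec_Least[where P = "\<lambda>L xs. a xs + 1 < 2 ^ Suc L"])
    show "total_rec (Suc n) (\<lambda>ys. if a (tl ys) + 1 < 2 ^ Suc (hd ys) then 1 else 0)"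
      by (rule total_rec_if_less[OF total_rec_add[OF total_rec_drop1[OF a] total_rec_const] total_rec_pow[OF total_rec_const total_rec_Suc[OF total_rec_hd]]])
    fix xs show "\<exists>L. a xs + 1 < 2 ^ Suc L"
      using enc_bounds[of "dec (a xs)"] by auto
  qed
  then show ?thesis by (rule total_rec_cong) (metis enc_dec bit_length_def length_enc_least)
qed

lemma total_rec_enc_append: "total_rec n a \<Longrightarrow> total_rec n b \<Longrightarrow> total_rec n (\<lambda>xs. enc (dec (a xs) @ dec (b xs)))"
proof -
  assume a: "total_rec n a" and b: "total_rec n b"
  have "total_rec n (\<lambda>xs. a xs + 2 ^ bit_length (a xs) * b xs)" by (rule total_rec_add[OF a total_rec_mult[OF total_rec_pow[OF total_rec_const total_rec_bit_length[OF a]] b]])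
  then show ?thesis by (rule total_rec_cong) (simp add: enc_append bit_length_def)
qed

lemma total_rec_enc_drop: "total_rec n i \<Longrightarrow> total_rec n a \<Longrightarrow> total_rec n (\<lambda>xs. enc (drop (i xs) (dec (a xs))))"
proof -
  assume i: "total_rec n i" and a: "total_rec n a"
  have "total_rec n (\<lambda>xs. (a xs + 1) div 2 ^ i xs - 1)" by (rule total_rec_pred[OF total_rec_div[OF total_rec_add[OF a total_rec_const] total_rec_pow[OF total_rec_const i]]])
  then show ?thesis by (rule total_rec_cong) (simp add: enc_drop)
qed

lemma total_rec_enc_take: "total_rec n i \<Longrightarrow> total_rec n a \<Longrightarrow> total_rec n (\<lambda>xs. enc (take (i xs) (dec (a xs))))"
proof -
  assume i: "total_rec n i" and a: "total_rec n a"
  have "total_rec n (\<lambda>xs. if i xs \<le> bit_length (a xs) then (a xs + 1) mod 2 ^ i xs + 2 ^ i xs - 1 else a xs)"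
    by (rule total_rec_if[OF total_rec_if_le[OF i total_rec_bit_length[OF a]] total_rec_sub[OF total_rec_add[OF total_rec_mod[OF total_rec_add[OF a total_rec_const] total_rec_pow[OF total_rec_const i]] total_rec_pow[OF total_rec_const i]] total_rec_const] a])
  then show ?thesis by (rule total_rec_cong) (simp add: enc_take bit_length_def)
qed

definition enc_bit :: "nat \<Rightarrow> nat \<Rightarrow> nat" where
  "enc_bit i m = (let d = (m + 1) div 2 ^ i - 1 in if d mod 2 = 0 \<and> d > 0 then 1 else 0)"

lemma enc_bit_enc: "i < length p \<Longrightarrow> enc_bit i (enc p) = (if p ! i then 1 else 0)"
proof -
  assume i: "i < length p"
  then have "drop i p = p ! i # drop (Suc i) p" by (simp add: Cons_nth_drop_Suc)
  then have "enc (drop i p) = 2 * enc (drop (Suc i) p) + (if p ! i then 2 else 1)" by simp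
  then show ?thesis unfolding enc_bit_def Let_def enc_drop[symmetric] by auto
qed

lemma total_rec_enc_bit: "total_rec n i \<Longrightarrow> total_rec n a \<Longrightarrow> total_rec n (\<lambda>xs. enc_bit (i xs) (a xs))"
proof -
  assume i: "total_rec n i" and a: "total_rec n a"
  have "total_rec n (\<lambda>xs. if ((a xs + 1) div 2 ^ i xs - 1) mod 2 = 0 \<and> 0 < (a xs + 1) div 2 ^ i xs - 1 then 1 else 0)"
  proof -
    have d: "total_rec n (\<lambda>xs. (a xs + 1) div 2 ^ i xs - 1)" by (rule total_rec_pred[OF total_rec_div[OF total_rec_add[OF a total_rec_const] total_rec_pow[OF total_rec_const i]]])
    show ?thesis by (rule total_rec_if_and[OF total_rec_if_eq[OF total_rec_mod[OF d total_rec_const] total_rec_const] total_rec_if_less[OF total_rec_const d]])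
  qed
  then show ?thesis by (rule total_rec_cong) (simp add: enc_bit_def Let_def)
qed

section \<open>Self-delimiting codes\<close>

definition sd_code :: "nat \<Rightarrow> bool list" where
  "sd_code k = replicate (bit_length k) True @ False # dec k"

lemma length_sd_code: "length (sd_code k) = 2 * bit_length k + 1"
  by (simp add: sd_code_def bit_length_def)

definition unary_prefix :: "bool list \<Rightarrow> nat" where
  "unary_prefix q = (LEAST i. \<not> (i < length q \<and> q ! i))"

definition sd_parse :: "bool list \<Rightarrow> nat \<times> bool list" where
  "sd_parse q = (let L = unary_prefix q in (enc (take L (drop (Suc L) q)), drop (Suc (L + L)) q))"

lemma unary_prefix_sd_code: "unary_prefix (sd_code k @ r) = bit_length k"
  unfolding unary_prefix_def
proof (rule Least_equality)
  show "\<not> (bit_length k < length (sd_code k @ r) \<and> (sd_code k @ r) ! bit_length k)"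
    by (simp add: sd_code_def nth_append)
  fix y assume "\<not> (y < length (sd_code k @ r) \<and> (sd_code k @ r) ! y)"
  then show "bit_length k \<le> y"
    by (cases "y < bit_length k") (auto simp: sd_code_def nth_append)
qed

lemma sd_parse_sd_code: "sd_parse (sd_code k @ r) = (k, r)"
proof -
  have d: "drop (Suc (bit_length k)) (sd_code k @ r) = dec k @ r" by (simp add: sd_code_def)
  have "drop (Suc (bit_length k + bit_length k)) (sd_code k @ r) = r"
  proof -
    have e: "Suc (bit_length k + bit_length k) = bit_length k + Suc (bit_length k)" by simp
    have "drop (Suc (bit_length k + bit_length k)) (sd_code k @ r) = drop (bit_length k) (drop (Suc (bit_length k)) (sd_code k @ r))"
      unfolding drop_drop e ..
    also have "\<dots> = r" unfolding d by (simp add: bit_length_def)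
    finally show ?thesis .
  qed
  then show ?thesis unfolding sd_parse_def Let_def unary_prefix_sd_code d by (simp add: bit_length_def)
qed

lemma total_rec_unary_prefix: "total_rec n a \<Longrightarrow> total_rec n (\<lambda>xs. unary_prefix (dec (a xs)))"
proof -
  assume a: "total_rec n a"
  have "total_rec n (\<lambda>xs. LEAST i. \<not> (i < bit_length (a xs) \<and> enc_bit i (a xs) = 1))"
  proof (rule total_rec_Least[where P = "\<lambda>i xs. \<not> (i < bit_length (a xs) \<and> enc_bit i (a xs) = 1)"])
    show "total_rec (Suc n) (\<lambda>ys. if \<not> (hd ys < bit_length (a (tl ys)) \<and> enc_bit (hd ys) (a (tl ys)) = 1) then 1 else 0)"
      by (rule total_rec_if_not[OF total_rec_if_and[OF total_rec_if_less[OF total_rec_hd total_rec_bit_length[OF total_rec_drop1[OF a]]] total_rec_if_eq[OF total_rec_enc_bit[OF total_rec_hd total_rec_drop1[OF a]] total_rec_const]]])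
    fix xs show "\<exists>i. \<not> (i < bit_length (a xs) \<and> enc_bit i (a xs) = 1)" by auto
  qed
  then show ?thesis
  proof (rule total_rec_cong)
    fix xs :: "nat list"
    have "\<And>i. (i < bit_length (a xs) \<and> enc_bit i (a xs) = 1) = (i < length (dec (a xs)) \<and> dec (a xs) ! i)"
      using enc_bit_enc[of _ "dec (a xs)"] by (auto simp: bit_length_def split: if_splits)
    then show "(LEAST i. \<not> (i < bit_length (a xs) \<and> enc_bit i (a xs) = 1)) = unary_prefix (dec (a xs))"
      unfolding unary_prefix_def by simp
  qed
qed

lemma total_rec_sd_parse_fst: "total_rec n a \<Longrightarrow> total_rec n (\<lambda>xs. fst (sd_parse (dec (a xs))))"
proof -
  assume a: "total_rec n a"
  have L: "total_rec n (\<lambda>xs. unary_prefix (dec (a xs)))" by (rule total_rec_unary_prefix[OF a])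
  have "total_rec n (\<lambda>xs. enc (take (unary_prefix (dec (a xs))) (dec (enc (drop (Suc (unary_prefix (dec (a xs)))) (dec (a xs)))))))"
    by (rule total_rec_enc_take[OF L total_rec_enc_drop[OF total_rec_Suc[OF L] a]])
  then show ?thesis by (rule total_rec_cong) (simp add: sd_parse_def Let_def)
qed

lemma total_rec_sd_parse_snd: "total_rec n a \<Longrightarrow> total_rec n (\<lambda>xs. enc (snd (sd_parse (dec (a xs)))))"
proof -
  assume a: "total_rec n a"
  have L: "total_rec n (\<lambda>xs. unary_prefix (dec (a xs)))" by (rule total_rec_unary_prefix[OF a])
  have "total_rec n (\<lambda>xs. enc (drop (Suc (unary_prefix (dec (a xs)) + unary_prefix (dec (a xs)))) (dec (a xs))))"
    by (rule total_rec_enc_drop[OF total_rec_Suc[OF total_rec_add[OF L L]] a])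
  then show ?thesis by (rule total_rec_cong) (simp add: sd_parse_def Let_def)
qed

text \<open>\<open>bin_index L x\<close> is the number \<open>x < 2 ^ L\<close> written with exactly \<open>L\<close> bits.\<close>

definition bin_index :: "nat \<Rightarrow> nat \<Rightarrow> bool list" where
  "bin_index L x = dec (2 ^ L + x - 1)"

definition bin_value :: "bool list \<Rightarrow> nat" where
  "bin_value w = enc w + 1 - 2 ^ length w"

lemma bin_index_props: "x < 2 ^ L \<Longrightarrow> length (bin_index L x) = L \<and> bin_value (bin_index L x) = x"
proof -
  assume x: "x < 2 ^ L"
  let ?m = "2 ^ L + x - 1"
  have p: "(1::nat) \<le> 2 ^ L" by simp
  have m1: "?m + 1 = 2 ^ L + x" using p by simp
  have b: "2 ^ length (dec ?m) \<le> ?m + 1 \<and> ?m + 1 < 2 ^ Suc (length (dec ?m))"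
    using enc_bounds[of "dec ?m"] by simp
  have "length (dec ?m) = L"
  proof -
    have "(2::nat) ^ length (dec ?m) < 2 ^ Suc L" using b m1 x by simp
    then have l1: "length (dec ?m) < Suc L" using power_strict_increasing_iff[of "2::nat" "length (dec ?m)" "Suc L"] by simp
    have "(2::nat) ^ L < 2 ^ Suc (length (dec ?m))" using b m1 by linarith
    then have "L < Suc (length (dec ?m))" using power_strict_increasing_iff[of "2::nat" L "Suc (length (dec ?m))"] by simp
    then show ?thesis using l1 by simp
  qed
  then show ?thesis unfolding bin_index_def bin_value_def using m1 by simp
qed

lemma total_rec_bin_value: "total_rec n a \<Longrightarrow> total_rec n (\<lambda>xs. bin_value (dec (a xs)))"
proof -
  assume a: "total_rec n a"
  have "total_rec n (\<lambda>xs. a xs + 1 - 2 ^ bit_length (a xs))" by (rule total_rec_sub[OF total_rec_add[OF a total_rec_const] total_rec_pow[OF total_rec_const total_rec_bit_length[OF a]]])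
  then show ?thesis by (rule total_rec_cong) (simp add: bin_value_def bit_length_def)
qed

lemma computable1I:
  assumes "partial_rec 1 (\<lambda>xs. map_option enc (V (dec (xs ! 0))))"
  shows "computable1 V"
proof -
  obtain r where r: "\<forall>xs. length xs = 1 \<longrightarrow> (\<forall>y. eval r xs y \<longleftrightarrow> map_option enc (V (dec (xs ! 0))) = Some y)"
    using assms unfolding partial_rec_def by blast
  show ?thesis unfolding computable1_def
  proof (intro exI[of _ r] allI)
    fix p w
    have "eval r [enc p] (enc w) \<longleftrightarrow> map_option enc (V p) = Some (enc w)" using r[rule_format, of "[enc p]"] by simp
    also have "\<dots> \<longleftrightarrow> V p = Some w" using enc_inj by (cases "V p") auto
    finally show "eval r [enc p] (enc w) \<longleftrightarrow> V p = Some w" .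
  qed
qed

lemma computable2I:
  assumes "partial_rec 2 (\<lambda>xs. map_option enc (V (dec (xs ! 0)) (dec (xs ! 1))))"
  shows "computable2 V"
proof -
  obtain r where r: "\<forall>xs. length xs = 2 \<longrightarrow> (\<forall>y. eval r xs y \<longleftrightarrow> map_option enc (V (dec (xs ! 0)) (dec (xs ! 1))) = Some y)"
    using assms unfolding partial_rec_def by blast
  show ?thesis unfolding computable2_def
  proof (intro exI[of _ r] allI)
    fix p v w
    have "eval r [enc p, enc v] (enc w) \<longleftrightarrow> map_option enc (V p v) = Some (enc w)" using r[rule_format, of "[enc p, enc v]"] by simp
    also have "\<dots> \<longleftrightarrow> V p v = Some w" using enc_inj by (cases "V p v") auto
    finally show "eval r [enc p, enc v] (enc w) \<longleftrightarrow> V p v = Some w" .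
  qed
qed

lemma list_length_1: "length xs = 1 \<Longrightarrow> xs = [xs ! 0]"
  by (cases xs) auto

lemma list_length_2: "length xs = 2 \<Longrightarrow> xs = [xs ! 0, xs ! 1]"
  by (cases xs; cases "tl xs") auto

lemma eq_dec_iff: "(a = dec y) = (enc a = y)"
  by (metis enc_dec dec_enc)

lemma partial_rec_computable1:
  assumes "computable1 U"
  shows "partial_rec 1 (\<lambda>xs. map_option enc (U (dec (xs ! 0))))"
proof -
  obtain r where r: "\<forall>p w. eval r [enc p] (enc w) \<longleftrightarrow> U p = Some w" using assms unfolding computable1_def by blast
  show ?thesis unfolding partial_rec_def
  proof (intro exI[of _ r] allI impI)
    fix xs :: "nat list" and y assume "length xs = 1"
    then have xs: "xs = [enc (dec (xs ! 0))]" using list_length_1 by simp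
    have "eval r xs y \<longleftrightarrow> eval r [enc (dec (xs ! 0))] (enc (dec y))" using xs by simp
    also have "\<dots> \<longleftrightarrow> U (dec (xs ! 0)) = Some (dec y)" using r by blast
    also have "\<dots> \<longleftrightarrow> map_option enc (U (dec (xs ! 0))) = Some y"
      by (cases "U (dec (xs ! 0))") (auto simp: eq_dec_iff)
    finally show "eval r xs y \<longleftrightarrow> map_option enc (U (dec (xs ! 0))) = Some y" .
  qed
qed

lemma partial_rec_computable2:
  assumes "computable2 W"
  shows "partial_rec 2 (\<lambda>xs. map_option enc (W (dec (xs ! 0)) (dec (xs ! 1))))"
proof -
  obtain r where r: "\<forall>p v w. eval r [enc p, enc v] (enc w) \<longleftrightarrow> W p v = Some w" using assms unfolding computable2_def by blast
  show ?thesis unfolding partial_rec_def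
  proof (intro exI[of _ r] allI impI)
    fix xs :: "nat list" and y assume "length xs = 2"
    then have xs: "xs = [enc (dec (xs ! 0)), enc (dec (xs ! 1))]" using list_length_2 by simp
    have "eval r xs y \<longleftrightarrow> eval r [enc (dec (xs ! 0)), enc (dec (xs ! 1))] (enc (dec y))" using xs by simp
    also have "\<dots> \<longleftrightarrow> W (dec (xs ! 0)) (dec (xs ! 1)) = Some (dec y)" using r by blast
    also have "\<dots> \<longleftrightarrow> map_option enc (W (dec (xs ! 0)) (dec (xs ! 1))) = Some y"
      by (cases "W (dec (xs ! 0)) (dec (xs ! 1))") (auto simp: eq_dec_iff)
    finally show "eval r xs y \<longleftrightarrow> map_option enc (W (dec (xs ! 0)) (dec (xs ! 1))) = Some y" .
  qed
qed

lemma partial_rec_computable1_comp: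
  assumes "computable1 U" "total_rec n a"
  shows "partial_rec n (\<lambda>xs. map_option enc (U (dec (a xs))))"
  using partial_rec_comp_tot[OF partial_rec_computable1[OF assms(1)], of "[a]" n] assms(2) by simp

lemma partial_rec_computable2_comp:
  assumes "computable2 W" "total_rec n a" "total_rec n b"
  shows "partial_rec n (\<lambda>xs. map_option enc (W (dec (a xs)) (dec (b xs))))"
  using partial_rec_comp_tot[OF partial_rec_computable2[OF assms(1)], of "[a, b]" n] assms(2,3) by simp

lemma partial_rec_map_option:
  assumes "partial_rec n A" "total_rec (Suc n) f"
  shows "partial_rec n (\<lambda>xs. map_option (\<lambda>v. f (v # xs)) (A xs))"
  using partial_rec_bind[OF assms(1) assms(2)] by (rule partial_rec_cong) (auto split: option.splits)

lemma total_rec_tl_of2: "total_rec 1 a \<Longrightarrow> total_rec 2 (\<lambda>ys. a (tl ys))"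
  using total_rec_drop1[of 1 a] by (simp add: numeral_2_eq_2)

lemma partial_rec_bind_of1: "partial_rec 1 A \<Longrightarrow> partial_rec 2 B \<Longrightarrow> partial_rec 1 (\<lambda>xs. case A xs of None \<Rightarrow> None | Some a \<Rightarrow> B (a # xs))"
  using partial_rec_bind[of 1 A B] by (simp add: numeral_2_eq_2)

lemma total_rec_arg0_of2: "total_rec 2 (\<lambda>xs. xs ! 0)" by (rule total_rec_proj) simp
lemma total_rec_arg1_of2: "total_rec 2 (\<lambda>xs. xs ! 1)" by (rule total_rec_proj) simp
lemma total_rec_arg0_of1: "total_rec 1 (\<lambda>xs. xs ! 0)" by (rule total_rec_proj) simp

lemma KP_le: "U p = Some u \<Longrightarrow> KP U u \<le> length p"
  unfolding KP_def by (rule Least_le) blast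

lemma KC_le: "W p v = Some u \<Longrightarrow> KC W u v \<le> length p"
  unfolding KC_def by (rule Least_le) blast

lemma universal1_KP_le:
  assumes "universal1 U" "computable1 V"
  shows "\<exists>c. \<forall>p u. V p = Some u \<longrightarrow> KP U u \<le> length p + c"
proof -
  obtain c where c: "\<forall>p u. V p = Some u \<longrightarrow> (\<exists>q. U q = Some u \<and> length q \<le> length p + c)"
    using assms unfolding universal1_def by blast
  show ?thesis using c KP_le by (meson order.trans)
qed

lemma universal2_KC_le:
  assumes "universal2 W" "computable2 V"
  shows "\<exists>c. \<forall>p v u. V p v = Some u \<longrightarrow> KC W u v \<le> length p + c"
proof -
  obtain c where c: "\<forall>p v u. V p v = Some u \<longrightarrow> (\<exists>q. W q v = Some u \<and> length q \<le> length p + c)"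
    using assms unfolding universal2_def by blast
  show ?thesis using c KC_le by (meson order.trans)
qed

lemma computable1_id: "computable1 (\<lambda>p. Some p)"
  by (rule computable1I) (simp add: total_rec_proj)

lemma computable2_id: "computable2 (\<lambda>p v. Some p)"
  by (rule computable2I) (simp add: total_rec_proj)

lemma KP_witness:
  assumes "universal1 U"
  shows "\<exists>p. U p = Some u \<and> length p = KP U u"
proof -
  obtain c where "\<forall>p u. Some p = Some u \<longrightarrow> (\<exists>q. U q = Some u \<and> length q \<le> length p + c)"
    using assms computable1_id unfolding universal1_def by blast
  then obtain q where "U q = Some u" by blast
  then have "\<exists>n p. length p = n \<and> U p = Some u" by blast
  then have "\<exists>p. length p = (LEAST n. \<exists>p. length p = n \<and> U p = Some u) \<and> U p = Some u" by (rule LeastI_ex)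
  then show ?thesis unfolding KP_def by blast
qed

lemma KC_witness:
  assumes "universal2 W"
  shows "\<exists>p. W p v = Some u \<and> length p = KC W u v"
proof -
  obtain c where "\<forall>p v u. Some p = Some u \<longrightarrow> (\<exists>q. W q v = Some u \<and> length q \<le> length p + c)"
    using assms computable2_id unfolding universal2_def by blast
  then obtain q where "W q v = Some u" by blast
  then have "\<exists>n p. length p = n \<and> W p v = Some u" by blast
  then have "\<exists>p. length p = (LEAST n. \<exists>p. length p = n \<and> W p v = Some u) \<and> W p v = Some u" by (rule LeastI_ex)
  then show ?thesis unfolding KC_def by blast
qed

lemma KP_le_length:
  assumes "universal1 U"
  shows "\<exists>c. \<forall>u. KP U u \<le> length u + c"
  using universal1_KP_le[OF assms computable1_id] by auto

lemma universal2_computable: "universal2 W \<Longrightarrow> computable2 W" by (simp add: universal2_def)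
lemma universal1_computable: "universal1 U \<Longrightarrow> computable1 U" by (simp add: universal1_def)

definition drop_suffix_machine :: "(bool list \<Rightarrow> bool list \<Rightarrow> bool list option) \<Rightarrow> bool list \<Rightarrow> bool list \<Rightarrow> bool list option" where
  "drop_suffix_machine W q z = W (snd (sd_parse q)) (take (length z - fst (sd_parse q)) z)"

definition drop_prefix_machine :: "(bool list \<Rightarrow> bool list \<Rightarrow> bool list option) \<Rightarrow> bool list \<Rightarrow> bool list \<Rightarrow> bool list option" where
  "drop_prefix_machine W q z = W (snd (sd_parse q)) (drop (fst (sd_parse q)) z)"

lemma computable2_drop_suffix_machine: "computable2 W \<Longrightarrow> computable2 (drop_suffix_machine W)"
proof (rule computable2I)
  assume W: "computable2 W"
  have "partial_rec 2 (\<lambda>xs. map_option enc (W (dec (enc (snd (sd_parse (dec (xs ! 0))))))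
      (dec (enc (take (bit_length (xs ! 1) - fst (sd_parse (dec (xs ! 0)))) (dec (xs ! 1)))))))"
    by (rule partial_rec_computable2_comp[OF W total_rec_sd_parse_snd[OF total_rec_arg0_of2] total_rec_enc_take[OF total_rec_sub[OF total_rec_bit_length[OF total_rec_arg1_of2] total_rec_sd_parse_fst[OF total_rec_arg0_of2]] total_rec_arg1_of2]])
  then show "partial_rec 2 (\<lambda>xs. map_option enc (drop_suffix_machine W (dec (xs ! 0)) (dec (xs ! 1))))"
    by (rule partial_rec_cong) (simp add: drop_suffix_machine_def bit_length_def)
qed

lemma computable2_drop_prefix_machine: "computable2 W \<Longrightarrow> computable2 (drop_prefix_machine W)"
proof (rule computable2I)
  assume W: "computable2 W"
  have "partial_rec 2 (\<lambda>xs. map_option enc (W (dec (enc (snd (sd_parse (dec (xs ! 0))))))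
      (dec (enc (drop (fst (sd_parse (dec (xs ! 0)))) (dec (xs ! 1)))))))"
    by (rule partial_rec_computable2_comp[OF W total_rec_sd_parse_snd[OF total_rec_arg0_of2] total_rec_enc_drop[OF total_rec_sd_parse_fst[OF total_rec_arg0_of2] total_rec_arg1_of2]])
  then show "partial_rec 2 (\<lambda>xs. map_option enc (drop_prefix_machine W (dec (xs ! 0)) (dec (xs ! 1))))"
    by (rule partial_rec_cong) (simp add: drop_prefix_machine_def)
qed

lemma KC_append_right_le:
  assumes "universal2 W"
  shows "\<exists>c. \<forall>u v w. KC W u (v @ w) \<le> KC W u v + 2 * bit_length (length w) + c"
proof -
  obtain c where c: "\<forall>p v u. drop_suffix_machine W p v = Some u \<longrightarrow> KC W u v \<le> length p + c"
    using universal2_KC_le[OF assms computable2_drop_suffix_machine[OF universal2_computable[OF assms]]] by blast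
  show ?thesis
  proof (intro exI[of _ "c + 1"] allI)
    fix u v w
    obtain p where p: "W p v = Some u" "length p = KC W u v" using KC_witness[OF assms] by blast
    have "drop_suffix_machine W (sd_code (length w) @ p) (v @ w) = Some u" using p by (simp add: drop_suffix_machine_def sd_parse_sd_code)
    then have "KC W u (v @ w) \<le> length (sd_code (length w) @ p) + c" using c by blast
    then show "KC W u (v @ w) \<le> KC W u v + 2 * bit_length (length w) + (c + 1)" using p by (simp add: length_sd_code)
  qed
qed

lemma KC_append_left_le:
  assumes "universal2 W"
  shows "\<exists>c. \<forall>u v w. KC W u (w @ v) \<le> KC W u v + 2 * bit_length (length w) + c"
proof -
  obtain c where c: "\<forall>p v u. drop_prefix_machine W p v = Some u \<longrightarrow> KC W u v \<le> length p + c"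
    using universal2_KC_le[OF assms computable2_drop_prefix_machine[OF universal2_computable[OF assms]]] by blast
  show ?thesis
  proof (intro exI[of _ "c + 1"] allI)
    fix u v w
    obtain p where p: "W p v = Some u" "length p = KC W u v" using KC_witness[OF assms] by blast
    have "drop_prefix_machine W (sd_code (length w) @ p) (w @ v) = Some u" using p by (simp add: drop_prefix_machine_def sd_parse_sd_code)
    then have "KC W u (w @ v) \<le> length (sd_code (length w) @ p) + c" using c by blast
    then show "KC W u (w @ v) \<le> KC W u v + 2 * bit_length (length w) + (c + 1)" using p by (simp add: length_sd_code)
  qed
qed

definition append_machine :: "(bool list \<Rightarrow> bool list option) \<Rightarrow> bool list \<Rightarrow> bool list option" where
  "append_machine U q = (case U (take (fst (sd_parse q)) (snd (sd_parse q))) of None \<Rightarrow> None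
     | Some a \<Rightarrow> map_option (\<lambda>b. a @ b) (U (drop (fst (sd_parse q)) (snd (sd_parse q)))))"

lemma computable1_append_machine: "computable1 U \<Longrightarrow> computable1 (append_machine U)"
proof (rule computable1I)
  assume U: "computable1 U"
  let ?T = "\<lambda>xs. enc (take (fst (sd_parse (dec (xs ! 0)))) (dec (enc (snd (sd_parse (dec (xs ! 0)))))))"
  let ?D = "\<lambda>xs. enc (drop (fst (sd_parse (dec (xs ! 0)))) (dec (enc (snd (sd_parse (dec (xs ! 0)))))))"
  have T: "total_rec 1 ?T" by (rule total_rec_enc_take[OF total_rec_sd_parse_fst[OF total_rec_arg0_of1] total_rec_sd_parse_snd[OF total_rec_arg0_of1]])
  have D: "total_rec 1 ?D" by (rule total_rec_enc_drop[OF total_rec_sd_parse_fst[OF total_rec_arg0_of1] total_rec_sd_parse_snd[OF total_rec_arg0_of1]])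
  have A: "partial_rec 1 (\<lambda>xs. map_option enc (U (dec (?T xs))))" by (rule partial_rec_computable1_comp[OF U T])
  have B0: "partial_rec 2 (\<lambda>ys. map_option enc (U (dec (?D (tl ys)))))" by (rule partial_rec_computable1_comp[OF U total_rec_tl_of2[OF D]])
  have f: "total_rec 3 (\<lambda>zs. enc (dec (zs ! 1) @ dec (zs ! 0)))" by (rule total_rec_enc_append; rule total_rec_proj; simp)
  have B: "partial_rec 2 (\<lambda>ys. map_option (\<lambda>v. enc (dec ((v # ys) ! 1) @ dec ((v # ys) ! 0))) (map_option enc (U (dec (?D (tl ys))))))"
    by (rule partial_rec_map_option[OF B0]) (use f in \<open>simp add: numeral_eq_Suc\<close>)
  have "partial_rec 1 (\<lambda>xs. case map_option enc (U (dec (?T xs))) of None \<Rightarrow> None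
     | Some a \<Rightarrow> map_option (\<lambda>v. enc (dec (((v # a # xs)) ! 1) @ dec ((v # a # xs) ! 0))) (map_option enc (U (dec (?D (tl (a # xs)))))))"
    by (rule partial_rec_bind_of1[OF A B])
  then show "partial_rec 1 (\<lambda>xs. map_option enc (append_machine U (dec (xs ! 0))))"
    by (rule partial_rec_cong) (auto simp: append_machine_def option.map_comp comp_def split: option.splits)
qed

lemma KP_append_le:
  assumes "universal1 U"
  shows "\<exists>c. \<forall>v w. KP U (v @ w) \<le> KP U v + KP U w + 2 * bit_length (KP U v) + c"
proof -
  obtain c where c: "\<forall>p u. append_machine U p = Some u \<longrightarrow> KP U u \<le> length p + c"
    using universal1_KP_le[OF assms computable1_append_machine[OF universal1_computable[OF assms]]] by blast
  show ?thesis
  proof (intro exI[of _ "c + 1"] allI)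
    fix v w
    obtain p1 where p1: "U p1 = Some v" "length p1 = KP U v" using KP_witness[OF assms] by blast
    obtain p2 where p2: "U p2 = Some w" "length p2 = KP U w" using KP_witness[OF assms] by blast
    have "append_machine U (sd_code (length p1) @ p1 @ p2) = Some (v @ w)" using p1 p2 by (simp add: append_machine_def sd_parse_sd_code)
    then have "KP U (v @ w) \<le> length (sd_code (length p1) @ p1 @ p2) + c" using c by blast
    then show "KP U (v @ w) \<le> KP U v + KP U w + 2 * bit_length (KP U v) + (c + 1)" using p1 p2 by (simp add: length_sd_code)
  qed
qed

definition insert_machine :: "(bool list \<Rightarrow> bool list option) \<Rightarrow> (bool list \<Rightarrow> bool list \<Rightarrow> bool list option) \<Rightarrow> bool list \<Rightarrow> bool list option" where
  "insert_machine U W q = (let m1 = fst (sd_parse q); q1 = snd (sd_parse q); m2 = fst (sd_parse q1); q2 = snd (sd_parse q1) in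
     case U (take m1 q2) of None \<Rightarrow> None
     | Some z \<Rightarrow> map_option (\<lambda>w. take m2 z @ w @ drop m2 z) (W (drop m1 q2) z))"

lemma computable1_insert_machine: "computable1 U \<Longrightarrow> computable2 W \<Longrightarrow> computable1 (insert_machine U W)"
proof (rule computable1I)
  assume U: "computable1 U" and W: "computable2 W"
  let ?Q1 = "\<lambda>xs. enc (snd (sd_parse (dec (xs ! 0))))"
  let ?M1 = "\<lambda>xs. fst (sd_parse (dec (xs ! 0)))"
  let ?M2 = "\<lambda>xs. fst (sd_parse (dec (?Q1 xs)))"
  let ?Q2 = "\<lambda>xs. enc (snd (sd_parse (dec (?Q1 xs))))"
  have Q1: "total_rec 1 ?Q1" by (rule total_rec_sd_parse_snd[OF total_rec_arg0_of1])
  have M1: "total_rec 1 ?M1" by (rule total_rec_sd_parse_fst[OF total_rec_arg0_of1])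
  have M2: "total_rec 1 ?M2" by (rule total_rec_sd_parse_fst[OF Q1])
  have Q2: "total_rec 1 ?Q2" by (rule total_rec_sd_parse_snd[OF Q1])
  let ?T = "\<lambda>xs. enc (take (?M1 xs) (dec (?Q2 xs)))"
  let ?D = "\<lambda>xs. enc (drop (?M1 xs) (dec (?Q2 xs)))"
  have T: "total_rec 1 ?T" by (rule total_rec_enc_take[OF M1 Q2])
  have D: "total_rec 1 ?D" by (rule total_rec_enc_drop[OF M1 Q2])
  have A: "partial_rec 1 (\<lambda>xs. map_option enc (U (dec (?T xs))))" by (rule partial_rec_computable1_comp[OF U T])
  have B0: "partial_rec 2 (\<lambda>ys. map_option enc (W (dec (?D (tl ys))) (dec (ys ! 0))))"
    by (rule partial_rec_computable2_comp[OF W total_rec_tl_of2[OF D] total_rec_arg0_of2])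
  have f: "total_rec 3 (\<lambda>zs. enc (dec (enc (take (?M2 (drop 2 zs)) (dec (zs ! 1)))) @ dec (enc (dec (zs ! 0) @ dec (enc (drop (?M2 (drop 2 zs)) (dec (zs ! 1))))))))"
  proof -
    have m: "total_rec 3 (\<lambda>zs. ?M2 (drop 2 zs))" using total_rec_drop2[OF M2] by (simp add: numeral_eq_Suc)
    have z1: "total_rec 3 (\<lambda>zs. zs ! 1)" by (rule total_rec_proj) simp
    have z0: "total_rec 3 (\<lambda>zs. zs ! 0)" by (rule total_rec_proj) simp
    show ?thesis by (rule total_rec_enc_append[OF total_rec_enc_take[OF m z1] total_rec_enc_append[OF z0 total_rec_enc_drop[OF m z1]]])
  qed
  have B: "partial_rec 2 (\<lambda>ys. map_option (\<lambda>v. (\<lambda>zs. enc (dec (enc (take (?M2 (drop 2 zs)) (dec (zs ! 1)))) @ dec (enc (dec (zs ! 0) @ dec (enc (drop (?M2 (drop 2 zs)) (dec (zs ! 1)))))))) (v # ys))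
      (map_option enc (W (dec (?D (tl ys))) (dec (ys ! 0)))))"
    by (rule partial_rec_map_option[OF B0]) (use f in \<open>simp add: numeral_eq_Suc\<close>)
  have "partial_rec 1 (\<lambda>xs. case map_option enc (U (dec (?T xs))) of None \<Rightarrow> None
     | Some a \<Rightarrow> map_option (\<lambda>v. (\<lambda>zs. enc (dec (enc (take (?M2 (drop 2 zs)) (dec (zs ! 1)))) @ dec (enc (dec (zs ! 0) @ dec (enc (drop (?M2 (drop 2 zs)) (dec (zs ! 1)))))))) (v # a # xs))
      (map_option enc (W (dec (?D (tl (a # xs)))) (dec ((a # xs) ! 0)))))"
    by (rule partial_rec_bind_of1[OF A B])
  then show "partial_rec 1 (\<lambda>xs. map_option enc (insert_machine U W (dec (xs ! 0))))"
    by (rule partial_rec_cong) (auto simp: insert_machine_def Let_def numeral_eq_Suc option.map_comp comp_def split: option.splits)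
qed

lemma KP_insert_le:
  assumes "universal1 U" "universal2 W"
  shows "\<exists>c. \<forall>a u b. KP U (a @ u @ b) \<le> KP U (a @ b) + KC W u (a @ b) + 2 * bit_length (KP U (a @ b)) + 2 * bit_length (length a) + c"
proof -
  obtain c where c: "\<forall>p u. insert_machine U W p = Some u \<longrightarrow> KP U u \<le> length p + c"
    using universal1_KP_le[OF assms(1) computable1_insert_machine[OF universal1_computable[OF assms(1)] universal2_computable[OF assms(2)]]] by blast
  show ?thesis
  proof (intro exI[of _ "c + 2"] allI)
    fix a u b
    obtain p1 where p1: "U p1 = Some (a @ b)" "length p1 = KP U (a @ b)" using KP_witness[OF assms(1)] by blast
    obtain p2 where p2: "W p2 (a @ b) = Some u" "length p2 = KC W u (a @ b)" using KC_witness[OF assms(2)] by blast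
    have "insert_machine U W (sd_code (length p1) @ sd_code (length a) @ p1 @ p2) = Some (a @ u @ b)"
      using p1 p2 by (simp add: insert_machine_def sd_parse_sd_code Let_def)
    then have "KP U (a @ u @ b) \<le> length (sd_code (length p1) @ sd_code (length a) @ p1 @ p2) + c" using c by blast
    then show "KP U (a @ u @ b) \<le> KP U (a @ b) + KC W u (a @ b) + 2 * bit_length (KP U (a @ b)) + 2 * bit_length (length a) + (c + 2)"
      using p1 p2 by (simp add: length_sd_code)
  qed
qed

definition npair :: "nat \<Rightarrow> nat \<Rightarrow> nat" where "npair a s = 2 ^ a * (2 * s + 1) - 1"
definition nfst :: "nat \<Rightarrow> nat" where "nfst t = (LEAST a. (t + 1) mod 2 ^ Suc a \<noteq> 0)"
definition nsnd :: "nat \<Rightarrow> nat" where "nsnd t = ((t + 1) div 2 ^ nfst t) div 2"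

lemma npair_Suc: "npair a s + 1 = 2 ^ a * (2 * s + 1)"
  unfolding npair_def by (simp add: Suc_leI)

lemma nfst_npair[simp]: "nfst (npair a s) = a"
  unfolding nfst_def npair_Suc
proof (rule Least_equality)
  show "2 ^ a * (2 * s + 1) mod 2 ^ Suc a \<noteq> 0"
  proof
    assume "2 ^ a * (2 * s + 1) mod 2 ^ Suc a = 0"
    then have "2 ^ Suc a dvd 2 ^ a * (2 * s + 1)" by (simp only: dvd_eq_mod_eq_0)
    then have "2 ^ a * 2 dvd 2 ^ a * (2 * s + 1)" by (simp only: power_Suc2)
    then have "(2::nat) dvd 2 * s + 1" by (metis dvd_mult_cancel zero_less_numeral zero_less_power)
    then show False by simp
  qed
  fix y assume h: "2 ^ a * (2 * s + 1) mod 2 ^ Suc y \<noteq> 0"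
  show "a \<le> y"
  proof (rule ccontr)
    assume "\<not> a \<le> y"
    then have "Suc y \<le> a" by simp
    then have "(2::nat) ^ Suc y dvd 2 ^ a" by (rule le_imp_power_dvd)
    then have "(2::nat) ^ Suc y dvd 2 ^ a * (2 * s + 1)" by simp
    then show False using h by simp
  qed
qed

lemma nsnd_npair[simp]: "nsnd (npair a s) = s"
  unfolding nsnd_def nfst_npair npair_Suc by simp

lemma nfst_exists: "(t + 1) mod 2 ^ Suc (t + 1) \<noteq> 0"
proof -
  have "t + 1 < 2 ^ (t + 1)" by (rule less_exp)
  also have "(2::nat) ^ (t + 1) \<le> 2 ^ Suc (t + 1)" by (rule power_increasing) simp_all
  finally show ?thesis by simp
qed

lemma npair_nfst_nsnd[simp]: "npair (nfst t) (nsnd t) = t"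
proof -
  let ?a = "nfst t"
  have ex: "(t + 1) mod 2 ^ Suc (t + 1) \<noteq> 0" by (rule nfst_exists)
  have na: "(t + 1) mod 2 ^ Suc ?a \<noteq> 0" unfolding nfst_def by (rule LeastI[of "\<lambda>a. (t + 1) mod 2 ^ Suc a \<noteq> 0", OF ex])
  have da: "2 ^ ?a dvd (t + 1)"
  proof (cases ?a)
    case 0 then show ?thesis by simp
  next
    case (Suc a')
    have "a' < ?a" using Suc by simp
    then have "\<not> (t + 1) mod 2 ^ Suc a' \<noteq> 0" unfolding nfst_def by (rule not_less_Least)
    then show ?thesis using Suc by auto
  qed
  then obtain q where q: "t + 1 = 2 ^ ?a * q" by blast
  have "odd q"
  proof
    assume "even q"
    then obtain q' where "q = 2 * q'" by blast
    then have "(t + 1) mod 2 ^ Suc ?a = 0" using q by (simp add: mult.commute mult.left_commute)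
    then show False using na by simp
  qed
  then have q2: "2 * (q div 2) + 1 = q" by simp
  have "nsnd t = q div 2" unfolding nsnd_def using q by simp
  then show ?thesis unfolding npair_def using q q2 by simp
qed

lemma total_rec_nfst: "total_rec n t \<Longrightarrow> total_rec n (\<lambda>xs. nfst (t xs))"
proof -
  assume t: "total_rec n t"
  have "total_rec n (\<lambda>xs. LEAST a. (t xs + 1) mod 2 ^ Suc a \<noteq> 0)"
  proof (rule total_rec_Least[where P = "\<lambda>a xs. (t xs + 1) mod 2 ^ Suc a \<noteq> 0"])
    show "total_rec (Suc n) (\<lambda>ys. if (t (tl ys) + 1) mod 2 ^ Suc (hd ys) \<noteq> 0 then 1 else 0)"
      by (rule total_rec_if_not[OF total_rec_if_eq[OF total_rec_mod[OF total_rec_add[OF total_rec_drop1[OF t] total_rec_const] total_rec_pow[OF total_rec_const total_rec_Suc[OF total_rec_hd]]] total_rec_const]])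
    fix xs
    show "\<exists>a. (t xs + 1) mod 2 ^ Suc a \<noteq> 0"
      using nfst_exists by blast
  qed
  then show ?thesis by (rule total_rec_cong) (simp add: nfst_def)
qed

lemma total_rec_nsnd: "total_rec n t \<Longrightarrow> total_rec n (\<lambda>xs. nsnd (t xs))"
proof -
  assume t: "total_rec n t"
  have "total_rec n (\<lambda>xs. ((t xs + 1) div 2 ^ nfst (t xs)) div 2)"
    by (rule total_rec_div[OF total_rec_div[OF total_rec_add[OF t total_rec_const] total_rec_pow[OF total_rec_const total_rec_nfst[OF t]]] total_rec_const])
  then show ?thesis by (rule total_rec_cong) (simp add: nsnd_def)
qed

section \<open>Halting events\<close>

text \<open>A halting event is a number \<open>t = npair (enc p) s\<close> such that the program \<open>p\<close> has length at most \<open>k\<close>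
  and its clocked run first halts with budget \<open>s\<close>. Listing the halting events in increasing order
  enumerates the outputs of the programs of length at most \<open>k\<close>, and the list is decidable.\<close>

definition run :: "recf \<Rightarrow> nat \<Rightarrow> nat \<Rightarrow> nat" where
  "run r s a = opt_code (eval_clocked r s [a])"

definition halt_event :: "recf \<Rightarrow> nat \<Rightarrow> nat \<Rightarrow> bool" where
  "halt_event r k t \<longleftrightarrow> bit_length (nfst t) \<le> k \<and> run r (nsnd t) (nfst t) \<noteq> 0
     \<and> (nsnd t = 0 \<or> run r (nsnd t - 1) (nfst t) = 0)"

definition event_output :: "recf \<Rightarrow> nat \<Rightarrow> nat" where
  "event_output r t = run r (nsnd t) (nfst t) - 1"

definition extends :: "recf \<Rightarrow> nat \<Rightarrow> nat \<Rightarrow> nat \<Rightarrow> nat \<Rightarrow> bool" where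
  "extends r k n x t \<longleftrightarrow> halt_event r k t \<and> n \<le> bit_length (event_output r t)
     \<and> enc (take n (dec (event_output r t))) = x"

definition count_extends :: "recf \<Rightarrow> nat \<Rightarrow> nat \<Rightarrow> nat \<Rightarrow> nat \<Rightarrow> nat" where
  "count_extends r k n x T = (\<Sum>t<T. if extends r k n x t then 1 else 0)"

definition threshold_event :: "recf \<Rightarrow> nat \<Rightarrow> nat \<Rightarrow> nat \<Rightarrow> nat \<Rightarrow> bool" where
  "threshold_event r k m n t \<longleftrightarrow> halt_event r k t \<and> n \<le> bit_length (event_output r t)
     \<and> count_extends r k n (enc (take n (dec (event_output r t)))) (Suc t) = 2 ^ m"

definition count_threshold :: "recf \<Rightarrow> nat \<Rightarrow> nat \<Rightarrow> nat \<Rightarrow> nat \<Rightarrow> nat" where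
  "count_threshold r k m n T = (\<Sum>t<T. if threshold_event r k m n t then 1 else 0)"

text \<open>Given \<open>v\<close>, the suffix machine reads \<open>k\<close> and an index and outputs the rest of the indexed output
  extending \<open>v\<close>; the prefix machine reads \<open>k\<close>, \<open>m\<close>, \<open>n\<close> and an index and outputs the prefix of the
  indexed threshold event.\<close>

definition suffix_machine :: "recf \<Rightarrow> bool list \<Rightarrow> bool list \<Rightarrow> bool list option" where
  "suffix_machine r q v = (let k = fst (sd_parse q); idx = bin_value (snd (sd_parse q)); n = length v in
     if \<exists>T. idx < count_extends r k n (enc v) (Suc T)
     then Some (drop n (dec (event_output r (LEAST T. idx < count_extends r k n (enc v) (Suc T))))) else None)"

definition prefix_machine :: "recf \<Rightarrow> bool list \<Rightarrow> bool list option" where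
  "prefix_machine r q = (let k = fst (sd_parse q); q1 = snd (sd_parse q); m = fst (sd_parse q1); q2 = snd (sd_parse q1);
     n = fst (sd_parse q2); idx = bin_value (snd (sd_parse q2)) in
     if \<exists>T. idx < count_threshold r k m n (Suc T)
     then Some (take n (dec (event_output r (LEAST T. idx < count_threshold r k m n (Suc T))))) else None)"

lemma total_rec_run: "total_rec n s \<Longrightarrow> total_rec n a \<Longrightarrow> total_rec n (\<lambda>xs. run r (s xs) (a xs))"
proof -
  assume s: "total_rec n s" and a: "total_rec n a"
  have "total_rec n (\<lambda>xs. (\<lambda>ys. opt_code (eval_clocked r (hd ys) (tl ys))) (map (\<lambda>g. g xs) [s, a]))"
    by (rule total_rec_comp[OF total_rec_clocked[of 1 r]]) (use s a in auto)
  then show ?thesis by (rule total_rec_cong) (simp add: run_def)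
qed

lemma total_rec_if_halt_event: "total_rec n k \<Longrightarrow> total_rec n t \<Longrightarrow> total_rec n (\<lambda>xs. if halt_event r (k xs) (t xs) then 1 else 0)"
proof -
  assume k: "total_rec n k" and t: "total_rec n t"
  have fst_t: "total_rec n (\<lambda>xs. nfst (t xs))" by (rule total_rec_nfst[OF t])
  have snd_t: "total_rec n (\<lambda>xs. nsnd (t xs))" by (rule total_rec_nsnd[OF t])
  have "total_rec n (\<lambda>xs. if bit_length (nfst (t xs)) \<le> k xs \<and> \<not> run r (nsnd (t xs)) (nfst (t xs)) = 0 \<and> (nsnd (t xs) = 0 \<or> run r (nsnd (t xs) - 1) (nfst (t xs)) = 0) then 1 else 0)"
    by (rule total_rec_if_and[OF total_rec_if_le[OF total_rec_bit_length[OF fst_t] k] total_rec_if_and[OF total_rec_if_not[OF total_rec_if_eq[OF total_rec_run[OF snd_t fst_t] total_rec_const]] total_rec_if_or[OF total_rec_if_eq[OF snd_t total_rec_const] total_rec_if_eq[OF total_rec_run[OF total_rec_pred[OF snd_t] fst_t] total_rec_const]]]])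
  then show ?thesis by (rule total_rec_cong) (simp add: halt_event_def)
qed

lemma total_rec_event_output: "total_rec n t \<Longrightarrow> total_rec n (\<lambda>xs. event_output r (t xs))"
proof -
  assume t: "total_rec n t"
  have "total_rec n (\<lambda>xs. run r (nsnd (t xs)) (nfst (t xs)) - 1)" by (rule total_rec_pred[OF total_rec_run[OF total_rec_nsnd[OF t] total_rec_nfst[OF t]]])
  then show ?thesis by (rule total_rec_cong) (simp add: event_output_def)
qed

lemma total_rec_if_extends: "total_rec n k \<Longrightarrow> total_rec n m \<Longrightarrow> total_rec n x \<Longrightarrow> total_rec n t \<Longrightarrow> total_rec n (\<lambda>xs. if extends r (k xs) (m xs) (x xs) (t xs) then 1 else 0)"
proof -
  assume k: "total_rec n k" and m: "total_rec n m" and x: "total_rec n x" and t: "total_rec n t"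
  have o: "total_rec n (\<lambda>xs. event_output r (t xs))" by (rule total_rec_event_output[OF t])
  have "total_rec n (\<lambda>xs. if halt_event r (k xs) (t xs) \<and> m xs \<le> bit_length (event_output r (t xs)) \<and> enc (take (m xs) (dec (event_output r (t xs)))) = x xs then 1 else 0)"
    by (rule total_rec_if_and[OF total_rec_if_halt_event[OF k t] total_rec_if_and[OF total_rec_if_le[OF m total_rec_bit_length[OF o]] total_rec_if_eq[OF total_rec_enc_take[OF m o] x]]])
  then show ?thesis by (rule total_rec_cong) (simp add: extends_def)
qed

lemma total_rec_count_extends: "total_rec n k \<Longrightarrow> total_rec n m \<Longrightarrow> total_rec n x \<Longrightarrow> total_rec n T \<Longrightarrow> total_rec n (\<lambda>xs. count_extends r (k xs) (m xs) (x xs) (T xs))"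
proof -
  assume k: "total_rec n k" and m: "total_rec n m" and x: "total_rec n x" and T: "total_rec n T"
  have f: "total_rec (Suc n) (\<lambda>ys. if extends r (k (tl ys)) (m (tl ys)) (x (tl ys)) (hd ys) then 1 else 0)"
    by (rule total_rec_if_extends[OF total_rec_drop1[OF k] total_rec_drop1[OF m] total_rec_drop1[OF x] total_rec_hd])
  have "total_rec n (\<lambda>xs. \<Sum>t<T xs. (\<lambda>ys. if extends r (k (tl ys)) (m (tl ys)) (x (tl ys)) (hd ys) then 1 else 0) (t # xs))"
    by (rule total_rec_sum[OF T f])
  then show ?thesis by (rule total_rec_cong) (simp add: count_extends_def)
qed

lemma total_rec_if_threshold_event: "total_rec n k \<Longrightarrow> total_rec n m \<Longrightarrow> total_rec n l \<Longrightarrow> total_rec n t \<Longrightarrow> total_rec n (\<lambda>xs. if threshold_event r (k xs) (m xs) (l xs) (t xs) then 1 else 0)"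
proof -
  assume k: "total_rec n k" and m: "total_rec n m" and l: "total_rec n l" and t: "total_rec n t"
  have o: "total_rec n (\<lambda>xs. event_output r (t xs))" by (rule total_rec_event_output[OF t])
  have "total_rec n (\<lambda>xs. if halt_event r (k xs) (t xs) \<and> l xs \<le> bit_length (event_output r (t xs)) \<and>
      count_extends r (k xs) (l xs) (enc (take (l xs) (dec (event_output r (t xs))))) (Suc (t xs)) = 2 ^ m xs then 1 else 0)"
    by (rule total_rec_if_and[OF total_rec_if_halt_event[OF k t] total_rec_if_and[OF total_rec_if_le[OF l total_rec_bit_length[OF o]] total_rec_if_eq[OF total_rec_count_extends[OF k l total_rec_enc_take[OF l o] total_rec_Suc[OF t]] total_rec_pow[OF total_rec_const m]]]])
  then show ?thesis by (rule total_rec_cong) (simp add: threshold_event_def)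
qed

lemma total_rec_count_threshold: "total_rec n k \<Longrightarrow> total_rec n m \<Longrightarrow> total_rec n l \<Longrightarrow> total_rec n T \<Longrightarrow> total_rec n (\<lambda>xs. count_threshold r (k xs) (m xs) (l xs) (T xs))"
proof -
  assume k: "total_rec n k" and m: "total_rec n m" and l: "total_rec n l" and T: "total_rec n T"
  have f: "total_rec (Suc n) (\<lambda>ys. if threshold_event r (k (tl ys)) (m (tl ys)) (l (tl ys)) (hd ys) then 1 else 0)"
    by (rule total_rec_if_threshold_event[OF total_rec_drop1[OF k] total_rec_drop1[OF m] total_rec_drop1[OF l] total_rec_hd])
  have "total_rec n (\<lambda>xs. \<Sum>t<T xs. (\<lambda>ys. if threshold_event r (k (tl ys)) (m (tl ys)) (l (tl ys)) (hd ys) then 1 else 0) (t # xs))"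
    by (rule total_rec_sum[OF T f])
  then show ?thesis by (rule total_rec_cong) (simp add: count_threshold_def)
qed

lemma computable2_suffix_machine: "computable2 (suffix_machine r)"
proof (rule computable2I)
  let ?k = "\<lambda>xs. fst (sd_parse (dec (xs ! 0)))"
  let ?i = "\<lambda>xs. bin_value (dec (enc (snd (sd_parse (dec (xs ! 0))))))"
  let ?n = "\<lambda>xs. bit_length (xs ! 1)"
  have k: "total_rec 2 ?k" by (rule total_rec_sd_parse_fst[OF total_rec_arg0_of2])
  have i: "total_rec 2 ?i" by (rule total_rec_bin_value[OF total_rec_sd_parse_snd[OF total_rec_arg0_of2]])
  have n: "total_rec 2 ?n" by (rule total_rec_bit_length[OF total_rec_arg1_of2])
  have S: "partial_rec 2 (\<lambda>xs. if \<exists>T. ?i xs < count_extends r (?k xs) (?n xs) (xs ! 1) (Suc T)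
      then Some (LEAST T. ?i xs < count_extends r (?k xs) (?n xs) (xs ! 1) (Suc T)) else None)"
  proof (rule partial_rec_Least[where P = "\<lambda>T xs. ?i xs < count_extends r (?k xs) (?n xs) (xs ! 1) (Suc T)"])
    have x1: "total_rec (Suc 2) (\<lambda>ys. tl ys ! 1)" by (rule total_rec_drop1[OF total_rec_arg1_of2])
    show "total_rec (Suc 2) (\<lambda>ys. if ?i (tl ys) < count_extends r (?k (tl ys)) (?n (tl ys)) (tl ys ! 1) (Suc (hd ys)) then 1 else 0)"
      by (rule total_rec_if_less[OF total_rec_drop1[OF i] total_rec_count_extends[OF total_rec_drop1[OF k] total_rec_drop1[OF n] x1 total_rec_Suc[OF total_rec_hd]]])
  qed
  have f: "total_rec (Suc 2) (\<lambda>ys. enc (drop (?n (tl ys)) (dec (event_output r (hd ys)))))"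
    by (rule total_rec_enc_drop[OF total_rec_drop1[OF n] total_rec_event_output[OF total_rec_hd]])
  have "partial_rec 2 (\<lambda>xs. map_option (\<lambda>v. (\<lambda>ys. enc (drop (?n (tl ys)) (dec (event_output r (hd ys))))) (v # xs))
     (if \<exists>T. ?i xs < count_extends r (?k xs) (?n xs) (xs ! 1) (Suc T)
      then Some (LEAST T. ?i xs < count_extends r (?k xs) (?n xs) (xs ! 1) (Suc T)) else None))"
    by (rule partial_rec_map_option[OF S f])
  then show "partial_rec 2 (\<lambda>xs. map_option enc (suffix_machine r (dec (xs ! 0)) (dec (xs ! 1))))"
    by (rule partial_rec_cong) (simp add: suffix_machine_def Let_def bit_length_def)
qed

lemma computable1_prefix_machine: "computable1 (prefix_machine r)"
proof (rule computable1I)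
  let ?k = "\<lambda>xs. fst (sd_parse (dec (xs ! 0)))"
  let ?q1 = "\<lambda>xs. enc (snd (sd_parse (dec (xs ! 0))))"
  let ?m = "\<lambda>xs. fst (sd_parse (dec (?q1 xs)))"
  let ?q2 = "\<lambda>xs. enc (snd (sd_parse (dec (?q1 xs))))"
  let ?l = "\<lambda>xs. fst (sd_parse (dec (?q2 xs)))"
  let ?i = "\<lambda>xs. bin_value (dec (enc (snd (sd_parse (dec (?q2 xs))))))"
  have k: "total_rec 1 ?k" by (rule total_rec_sd_parse_fst[OF total_rec_arg0_of1])
  have q1: "total_rec 1 ?q1" by (rule total_rec_sd_parse_snd[OF total_rec_arg0_of1])
  have m: "total_rec 1 ?m" by (rule total_rec_sd_parse_fst[OF q1])
  have q2: "total_rec 1 ?q2" by (rule total_rec_sd_parse_snd[OF q1])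
  have l: "total_rec 1 ?l" by (rule total_rec_sd_parse_fst[OF q2])
  have i: "total_rec 1 ?i" by (rule total_rec_bin_value[OF total_rec_sd_parse_snd[OF q2]])
  have S: "partial_rec 1 (\<lambda>xs. if \<exists>T. ?i xs < count_threshold r (?k xs) (?m xs) (?l xs) (Suc T)
      then Some (LEAST T. ?i xs < count_threshold r (?k xs) (?m xs) (?l xs) (Suc T)) else None)"
  proof (rule partial_rec_Least[where P = "\<lambda>T xs. ?i xs < count_threshold r (?k xs) (?m xs) (?l xs) (Suc T)"])
    show "total_rec (Suc 1) (\<lambda>ys. if ?i (tl ys) < count_threshold r (?k (tl ys)) (?m (tl ys)) (?l (tl ys)) (Suc (hd ys)) then 1 else 0)"
      by (rule total_rec_if_less[OF total_rec_drop1[OF i] total_rec_count_threshold[OF total_rec_drop1[OF k] total_rec_drop1[OF m] total_rec_drop1[OF l] total_rec_Suc[OF total_rec_hd]]])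
  qed
  have f: "total_rec (Suc 1) (\<lambda>ys. enc (take (?l (tl ys)) (dec (event_output r (hd ys)))))"
    by (rule total_rec_enc_take[OF total_rec_drop1[OF l] total_rec_event_output[OF total_rec_hd]])
  have "partial_rec 1 (\<lambda>xs. map_option (\<lambda>v. (\<lambda>ys. enc (take (?l (tl ys)) (dec (event_output r (hd ys))))) (v # xs))
     (if \<exists>T. ?i xs < count_threshold r (?k xs) (?m xs) (?l xs) (Suc T)
      then Some (LEAST T. ?i xs < count_threshold r (?k xs) (?m xs) (?l xs) (Suc T)) else None))"
    by (rule partial_rec_map_option[OF S f])
  then show "partial_rec 1 (\<lambda>xs. map_option enc (prefix_machine r (dec (xs ! 0))))"
    by (rule partial_rec_cong) (simp add: prefix_machine_def Let_def)
qed

lemma sum_indicator_card: "(\<Sum>t<(T::nat). if P t then 1 else 0) = card {t. t < T \<and> P t}"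
proof (induction T)
  case 0 then show ?case by simp
next
  case (Suc T)
  have e: "{t. t < Suc T \<and> P t} = {t. t < T \<and> P t} \<union> (if P T then {T} else {})" by (auto simp: less_Suc_eq)
  have f: "finite {t. t < T \<and> P t}" by simp
  show ?case using Suc by (simp add: e card_insert_if f)
qed

lemma card_less_Suc: "card {t. t < Suc (T::nat) \<and> P t} = card {t. t < T \<and> P t} + (if P T then 1 else 0)"
  using sum_indicator_card[of P "Suc T"] sum_indicator_card[of P T] by simp

lemma card_less_mono: "(T1::nat) \<le> T2 \<Longrightarrow> card {t. t < T1 \<and> P t} \<le> card {t. t < T2 \<and> P t}"
  by (rule card_mono) auto

lemma rank_select:
  fixes t0 :: nat
  assumes fin: "finite {t. R t}" and r0: "R t0"
  shows "(\<exists>T. card {t. t < t0 \<and> R t} < card {t. t < Suc T \<and> R t})"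
    and "(LEAST T. card {t. t < t0 \<and> R t} < card {t. t < Suc T \<and> R t}) = t0"
    and "card {t. t < t0 \<and> R t} < card {t. R t}"
proof -
  have s: "card {t. t < Suc t0 \<and> R t} = card {t. t < t0 \<and> R t} + 1" using card_less_Suc[of t0 R] r0 by simp
  then show "\<exists>T. card {t. t < t0 \<and> R t} < card {t. t < Suc T \<and> R t}" by (intro exI[of _ t0]) simp
  show "(LEAST T. card {t. t < t0 \<and> R t} < card {t. t < Suc T \<and> R t}) = t0"
  proof (rule Least_equality)
    show "card {t. t < t0 \<and> R t} < card {t. t < Suc t0 \<and> R t}" using s by simp
    fix y assume "card {t. t < t0 \<and> R t} < card {t. t < Suc y \<and> R t}"
    then show "t0 \<le> y" using card_less_mono[of "Suc y" t0 R] by (meson not_less not_less_eq_eq)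
  qed
  have proper: "{t. t < t0 \<and> R t} \<subset> {t. R t}" using r0 by auto
  show "card {t. t < t0 \<and> R t} < card {t. R t}" by (rule psubset_card_mono[OF fin proper])
qed

lemma card_bool_lists_le: "card {p :: bool list. length p \<le> k} < 2 ^ Suc k" and finite_bool_lists_le: "finite {p :: bool list. length p \<le> k}"
proof -
  have sub: "enc ` {p. length p \<le> k} \<subseteq> {..< (2::nat) ^ Suc k - 1}"
  proof
    fix x assume "x \<in> enc ` {p. length p \<le> k}"
    then obtain p where p: "x = enc p" "length p \<le> k" by blast
    have "enc p + 1 < 2 ^ Suc (length p)" using enc_bounds by blast
    also have "(2::nat) ^ Suc (length p) \<le> 2 ^ Suc k" using p(2) by (intro power_increasing) simp_all
    finally show "x \<in> {..< (2::nat) ^ Suc k - 1}" using p(1) by simp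
  qed
  have inj: "inj_on enc {p. length p \<le> k}" using enc_inj by (meson inj_onI)
  have "card (enc ` {p. length p \<le> k}) \<le> card {..< (2::nat) ^ Suc k - 1}" by (rule card_mono[OF _ sub]) simp
  then have "card {p :: bool list. length p \<le> k} \<le> 2 ^ Suc k - 1" using card_image[OF inj] by simp
  moreover have "(0::nat) < 2 ^ Suc k" by simp
  ultimately show "card {p :: bool list. length p \<le> k} < 2 ^ Suc k" by linarith
  show "finite {p :: bool list. length p \<le> k}"
    using finite_subset[OF sub] inj by (simp add: finite_image_iff)
qed

lemma power2_bracket: "(1::nat) \<le> N \<Longrightarrow> \<exists>m. 2 ^ m \<le> N \<and> N < 2 ^ Suc m"
proof -
  assume "1 \<le> N"
  then have "enc (dec (N - 1)) + 1 = N" by simp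
  then show ?thesis using enc_bounds[of "dec (N - 1)"] by metis
qed

lemma card_reaches:
  fixes R :: "nat \<Rightarrow> bool"
  assumes "finite {t. R t}" and "1 \<le> N" and "N \<le> card {t. R t}"
  obtains t where "R t" and "card {t'. t' < Suc t \<and> R t'} = N"
proof -
  let ?c = "\<lambda>T. card {t. t < T \<and> R t}"
  obtain T0 where "\<forall>t. R t \<longrightarrow> t < T0"
    using assms(1) by (auto simp: finite_nat_set_iff_bounded)
  then have "?c T0 = card {t. R t}" by (intro arg_cong[where f = card]) auto
  then have ex: "N \<le> ?c (Suc T0)" using assms(3) card_less_mono[of T0 "Suc T0" R] by linarith
  define t where "t = (LEAST t. N \<le> ?c (Suc t))"
  have reached: "N \<le> ?c (Suc t)" unfolding t_def by (rule LeastI[of "\<lambda>t. N \<le> ?c (Suc t)", OF ex])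
  have before: "?c t < N"
  proof (cases t)
    case (Suc t')
    then have "\<not> N \<le> ?c (Suc t')" unfolding t_def by (metis lessI not_less_Least)
    then show ?thesis using Suc by simp
  qed (use assms(2) in simp)
  have "?c (Suc t) = ?c t + (if R t then 1 else 0)" by (rule card_less_Suc)
  then show thesis using reached before by (intro that[of t]) (auto split: if_splits)
qed

definition halt_time :: "recf \<Rightarrow> nat \<Rightarrow> nat" where "halt_time r a = (LEAST s. eval_clocked r s [a] \<noteq> None)"
definition halt_event_of :: "recf \<Rightarrow> bool list \<Rightarrow> nat" where "halt_event_of r p = npair (enc p) (halt_time r (enc p))"

locale universal_recf =
  fixes U :: "bool list \<Rightarrow> bool list option" and r :: recf
  assumes rU: "\<And>p w. eval r [enc p] (enc w) \<longleftrightarrow> U p = Some w"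
begin

lemma U_iff_eval_clocked: "U p = Some w \<longleftrightarrow> (\<exists>s. eval_clocked r s [enc p] = Some (enc w))"
  using rU eval_iff_eval_clocked by blast

lemma eval_clocked_U: "eval_clocked r s [enc p] = Some y \<Longrightarrow> U p = Some (dec y)"
  using U_iff_eval_clocked by (metis enc_dec)

lemma halt_event_sound:
  assumes "halt_event r k t"
  shows "length (dec (nfst t)) \<le> k \<and> U (dec (nfst t)) = Some (dec (event_output r t)) \<and> t = halt_event_of r (dec (nfst t))"
proof -
  let ?a = "nfst t" and ?s = "nsnd t"
  have h: "bit_length ?a \<le> k" "run r ?s ?a \<noteq> 0" "?s = 0 \<or> run r (?s - 1) ?a = 0" using assms by (auto simp: halt_event_def)
  obtain y where y: "eval_clocked r ?s [?a] = Some y" using h(2) by (cases "eval_clocked r ?s [?a]") (auto simp: run_def)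
  have o: "event_output r t = y" using y by (simp add: event_output_def run_def)
  have U: "U (dec ?a) = Some (dec y)" using eval_clocked_U[of ?s "dec ?a" y] y by simp
  have "halt_time r ?a = ?s"
    unfolding halt_time_def
  proof (rule Least_equality)
    show "eval_clocked r ?s [?a] \<noteq> None" using y by simp
    fix s' assume s': "eval_clocked r s' [?a] \<noteq> None"
    show "?s \<le> s'"
    proof (rule ccontr)
      assume "\<not> ?s \<le> s'"
      then have lt: "s' \<le> ?s - 1" "?s \<noteq> 0" by auto
      then have none: "eval_clocked r (?s - 1) [?a] = None" using h(3) by (simp add: run_def opt_code_eq_0_iff)
      obtain y' where "eval_clocked r s' [?a] = Some y'" using s' by blast
      then have "eval_clocked r (?s - 1) [?a] = Some y'" using eval_clocked_mono lt(1) by blast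
      then show False using none by simp
    qed
  qed
  then have "t = halt_event_of r (dec ?a)" unfolding halt_event_of_def by simp
  then show ?thesis using h(1) U o by (simp add: bit_length_def)
qed

lemma halt_event_complete:
  assumes "length p \<le> k" "U p = Some w"
  shows "halt_event r k (halt_event_of r p) \<and> event_output r (halt_event_of r p) = enc w \<and> nfst (halt_event_of r p) = enc p"
proof -
  obtain s0 where s0: "eval_clocked r s0 [enc p] = Some (enc w)" using assms(2) U_iff_eval_clocked by blast
  let ?h = "halt_time r (enc p)"
  have hn: "eval_clocked r ?h [enc p] \<noteq> None" unfolding halt_time_def by (rule LeastI[of _ s0]) (simp add: s0)
  then obtain y where y: "eval_clocked r ?h [enc p] = Some y" by blast
  have "y = enc w"
  proof -
    have "eval_clocked r (max s0 ?h) [enc p] = Some y" using eval_clocked_mono[OF y] by simp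
    moreover have "eval_clocked r (max s0 ?h) [enc p] = Some (enc w)" using eval_clocked_mono[OF s0] by simp
    ultimately show ?thesis by simp
  qed
  have before: "?h \<noteq> 0 \<Longrightarrow> eval_clocked r (?h - 1) [enc p] = None"
    unfolding halt_time_def using not_less_Least[of "?h - 1" "\<lambda>s. eval_clocked r s [enc p] \<noteq> None"] by (simp add: halt_time_def)
  show ?thesis unfolding halt_event_of_def halt_event_def event_output_def run_def using assms(1) y before \<open>y = enc w\<close>
    by (cases "halt_time r (enc p) = 0") (auto simp: bit_length_def)
qed

definition halt_events :: "nat \<Rightarrow> nat set" where "halt_events k = {t. halt_event r k t}"

lemma halt_events_image: "halt_events k = halt_event_of r ` {p. length p \<le> k \<and> U p \<noteq> None}"
proof
  show "halt_events k \<subseteq> halt_event_of r ` {p. length p \<le> k \<and> U p \<noteq> None}"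
  proof
    fix t assume "t \<in> halt_events k"
    then have "halt_event r k t" by (simp add: halt_events_def)
    from halt_event_sound[OF this] show "t \<in> halt_event_of r ` {p. length p \<le> k \<and> U p \<noteq> None}" by auto
  qed
  show "halt_event_of r ` {p. length p \<le> k \<and> U p \<noteq> None} \<subseteq> halt_events k"
    using halt_event_complete by (auto simp: halt_events_def)
qed

lemma finite_halt_events: "finite (halt_events k)"
  unfolding halt_events_image by (rule finite_imageI) (rule finite_subset[OF _ finite_bool_lists_le[of k]], auto)

lemma card_halt_events: "card (halt_events k) < 2 ^ Suc k"
proof -
  have "card (halt_events k) \<le> card {p. length p \<le> k \<and> U p \<noteq> None}" unfolding halt_events_image by (rule card_image_le) (rule finite_subset[OF _ finite_bool_lists_le[of k]], auto)
  also have "\<dots> \<le> card {p :: bool list. length p \<le> k}" by (rule card_mono[OF finite_bool_lists_le]) auto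
  finally show ?thesis using card_bool_lists_le[of k] by linarith
qed


lemma count_extends_card: "count_extends r k n x T = card {t. t < T \<and> extends r k n x t}"
  unfolding count_extends_def by (rule sum_indicator_card)

lemma count_threshold_card: "count_threshold r k m n T = card {t. t < T \<and> threshold_event r k m n t}"
  unfolding count_threshold_def by (rule sum_indicator_card)

lemma finite_extends: "finite {t. extends r k n x t}"
  by (rule finite_subset[OF _ finite_halt_events[of k]]) (auto simp: halt_events_def extends_def)

lemma extends_subset_halt_events: "{t. extends r k n x t} \<subseteq> halt_events k"
  by (auto simp: halt_events_def extends_def)

lemma suffix_machine_describes:
  assumes pp: "U pp = Some (v @ u)" "length pp \<le> k"
  shows "\<exists>m idx. 2 ^ m \<le> card {t. extends r k (length v) (enc v) t} \<and> idx < 2 ^ Suc m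
     \<and> suffix_machine r (sd_code k @ bin_index (Suc m) idx) v = Some u"
proof -
  let ?n = "length v"
  let ?R = "\<lambda>t. extends r k ?n (enc v) t"
  let ?t = "halt_event_of r pp"
  have hc: "halt_event r k ?t \<and> event_output r ?t = enc (v @ u) \<and> nfst ?t = enc pp" by (rule halt_event_complete[OF pp(2) pp(1)])
  have Rt: "?R ?t" using hc by (simp add: extends_def bit_length_def)
  have fin: "finite {t. ?R t}" by (rule finite_extends)
  have sel: "(\<exists>T. card {t. t < ?t \<and> ?R t} < card {t. t < Suc T \<and> ?R t})"
    "(LEAST T. card {t. t < ?t \<and> ?R t} < card {t. t < Suc T \<and> ?R t}) = ?t"
    "card {t. t < ?t \<and> ?R t} < card {t. ?R t}"
    using rank_select[OF fin, of ?t] Rt by blast+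
  have "1 \<le> card {t. ?R t}" using sel(3) by linarith
  then obtain m where m: "2 ^ m \<le> card {t. ?R t}" "card {t. ?R t} < 2 ^ Suc m" using power2_bracket by blast
  let ?idx = "card {t. t < ?t \<and> ?R t}"
  have idx: "?idx < 2 ^ Suc m" using sel(3) m(2) by linarith
  have b: "bin_value (bin_index (Suc m) ?idx) = ?idx" using bin_index_props[OF idx] by blast
  have "suffix_machine r (sd_code k @ bin_index (Suc m) ?idx) v = Some (drop ?n (dec (event_output r ?t)))"
    unfolding suffix_machine_def Let_def sd_parse_sd_code fst_conv snd_conv b count_extends_card using sel(1,2) by simp
  also have "\<dots> = Some u" using hc by simp
  finally show ?thesis using m(1) idx by blast
qed

lemma threshold_event_iff:
  "threshold_event r k m n t \<longleftrightarrow> extends r k n (enc (take n (dec (event_output r t)))) t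
     \<and> card {t'. t' < Suc t \<and> extends r k n (enc (take n (dec (event_output r t)))) t'} = 2 ^ m"
  by (auto simp: threshold_event_def extends_def count_extends_card)

lemma threshold_event_exists:
  assumes "2 ^ m \<le> card {t. extends r k n (enc v) t}"
  obtains t where "threshold_event r k m n t" and "take n (dec (event_output r t)) = v"
proof -
  obtain t where t: "extends r k n (enc v) t" "card {t'. t' < Suc t \<and> extends r k n (enc v) t'} = 2 ^ m"
    using card_reaches[OF finite_extends _ assms] by auto
  then have "take n (dec (event_output r t)) = v"
    unfolding extends_def using enc_inj by blast
  with t show thesis by (intro that) (simp_all add: threshold_event_iff)
qed

text \<open>Distinct threshold events announce distinct prefixes, each of which is extended by at least
  \<open>2 ^ m\<close> halting events; so there are fewer than \<open>2 ^ (k + 1 - m)\<close> of them.\<close>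

lemma card_threshold_events: "card {t. threshold_event r k m n t} * 2 ^ m < 2 ^ Suc k"
proof -
  let ?B = "\<lambda>t. threshold_event r k m n t"
  let ?V = "\<lambda>t. enc (take n (dec (event_output r t)))"
  let ?S = "\<lambda>t. {t'. extends r k n (?V t) t'}"
  have finB: "finite {t. ?B t}"
    by (rule finite_subset[OF _ finite_halt_events[of k]]) (auto simp: halt_events_def threshold_event_def)
  have no_repeat: "\<not> (?B a \<and> ?B b \<and> ?V a = ?V b \<and> a < b)" for a b
  proof
    assume "?B a \<and> ?B b \<and> ?V a = ?V b \<and> a < b"
    then have ba: "?B a" and bb: "?B b" and eq: "?V a = ?V b" and ab: "a < b" by blast+
    let ?before = "\<lambda>T. {t. t < T \<and> extends r k n (?V a) t}"
    have ca: "card (?before (Suc a)) = 2 ^ m" using ba by (simp add: threshold_event_iff)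
    have cb: "card (?before (Suc b)) = 2 ^ m" using bb eq by (simp add: threshold_event_iff)
    have "extends r k n (?V a) b" using bb eq by (simp add: threshold_event_iff)
    then have "insert b (?before (Suc a)) \<subseteq> ?before (Suc b)" using ab by auto
    then have "card (insert b (?before (Suc a))) \<le> 2 ^ m"
      using card_mono[of "?before (Suc b)"] cb by simp
    moreover have "card (insert b (?before (Suc a))) = Suc (2 ^ m)"
      using ab ca by (subst card_insert_disjoint) auto
    ultimately show False by simp
  qed
  have disjoint: "?S t1 \<inter> ?S t2 = {}" if "?B t1" "?B t2" "t1 \<noteq> t2" for t1 t2
  proof -
    have "?V t1 \<noteq> ?V t2"
      using no_repeat[of t1 t2] no_repeat[of t2 t1] that by (metis linorder_neqE_nat)
    then show ?thesis by (auto simp: extends_def)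
  qed
  have big: "2 ^ m \<le> card (?S t)" if "?B t" for t
  proof -
    have "card {t'. t' < Suc t \<and> extends r k n (?V t) t'} \<le> card (?S t)"
      by (rule card_mono[OF finite_extends]) auto
    then show ?thesis using that by (simp add: threshold_event_iff)
  qed
  have "card {t. ?B t} * 2 ^ m \<le> (\<Sum>t\<in>{t. ?B t}. card (?S t))"
    using big sum_mono[of "{t. ?B t}" "\<lambda>_. 2 ^ m" "\<lambda>t. card (?S t)"] by simp
  also have "\<dots> = card (\<Union>t\<in>{t. ?B t}. ?S t)"
    by (rule card_UN_disjoint[symmetric, OF finB]) (use disjoint finite_extends in auto)
  also have "\<dots> \<le> card (halt_events k)"
    by (rule card_mono[OF finite_halt_events]) (use extends_subset_halt_events in blast)
  finally show ?thesis using card_halt_events[of k] by linarith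
qed

lemma prefix_machine_describes:
  assumes m: "2 ^ m \<le> card {t. extends r k n (enc v) t}"
  shows "m \<le> k \<and> (\<exists>idx. idx < 2 ^ (Suc k - m) \<and>
    prefix_machine r (sd_code k @ sd_code m @ sd_code n @ bin_index (Suc k - m) idx) = Some v)"
proof -
  let ?B = "\<lambda>t. threshold_event r k m n t"
  have "2 ^ m < (2::nat) ^ Suc k"
    using m card_mono[OF finite_halt_events extends_subset_halt_events[of k n "enc v"]]
      card_halt_events[of k] by linarith
  then have mk: "m < Suc k" using power_strict_increasing_iff[of "2::nat" m "Suc k"] by simp
  obtain tv where tv: "?B tv" "take n (dec (event_output r tv)) = v"
    using threshold_event_exists[OF m] by blast
  have finB: "finite {t. ?B t}"
    by (rule finite_subset[OF _ finite_halt_events[of k]]) (auto simp: halt_events_def threshold_event_def)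
  have "card {t. ?B t} * 2 ^ m < 2 ^ (Suc k - m) * 2 ^ m"
    using card_threshold_events[of k m n] mk by (simp flip: power_add)
  then have cB: "card {t. ?B t} < 2 ^ (Suc k - m)" by simp
  have sel: "(\<exists>T. card {t. t < tv \<and> ?B t} < card {t. t < Suc T \<and> ?B t})"
    "(LEAST T. card {t. t < tv \<and> ?B t} < card {t. t < Suc T \<and> ?B t}) = tv"
    "card {t. t < tv \<and> ?B t} < card {t. ?B t}"
    using rank_select[OF finB, of tv] tv(1) by blast+
  let ?idx = "card {t. t < tv \<and> ?B t}"
  have idx: "?idx < 2 ^ (Suc k - m)" using sel(3) cB by linarith
  have b: "bin_value (bin_index (Suc k - m) ?idx) = ?idx" using bin_index_props[OF idx] by blast
  have "prefix_machine r (sd_code k @ sd_code m @ sd_code n @ bin_index (Suc k - m) ?idx)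
      = Some (take n (dec (event_output r tv)))"
    unfolding prefix_machine_def Let_def sd_parse_sd_code fst_conv snd_conv b count_threshold_card
    using sel(1,2) by simp
  then show ?thesis using tv(2) idx mk by auto
qed
end

text \<open>If \<open>v u\<close> has a program of length \<open>k\<close> and \<open>v\<close> has
  between \<open>2 ^ m\<close> and \<open>2 ^ (m + 1)\<close> extensions among the outputs of such programs, then \<open>u\<close> is
  described given \<open>v\<close> by \<open>k\<close> and \<open>m + 1\<close> further bits, and \<open>v\<close> by \<open>k\<close>, \<open>m\<close>, \<open>|v|\<close> and \<open>k + 1 - m\<close> bits.\<close>

lemma KC_plus_KP_le:
  assumes U: "universal1 U" and W: "universal2 W"
  shows "\<exists>c. \<forall>v u. KC W u v + KP U v \<le> KP U (v @ u) + 6 * bit_length (KP U (v @ u)) + 2 * bit_length (length v) + c"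
proof -
  obtain r where r: "\<forall>p w. eval r [enc p] (enc w) \<longleftrightarrow> U p = Some w"
    using universal1_computable[OF U] unfolding computable1_def by blast
  interpret universal_recf U r by unfold_locales (use r in blast)
  obtain c_suffix where c_suffix: "\<forall>p v u. suffix_machine r p v = Some u \<longrightarrow> KC W u v \<le> length p + c_suffix"
    using universal2_KC_le[OF W computable2_suffix_machine] by blast
  obtain c_prefix where c_prefix: "\<forall>p u. prefix_machine r p = Some u \<longrightarrow> KP U u \<le> length p + c_prefix"
    using universal1_KP_le[OF U computable1_prefix_machine] by blast
  show ?thesis
  proof (intro exI[of _ "c_suffix + c_prefix + 6"] allI)
    fix v u
    let ?k = "KP U (v @ u)"
    obtain pp where pp: "U pp = Some (v @ u)" "length pp = ?k" using KP_witness[OF U] by blast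
    have ex: "\<exists>m idx. 2 ^ m \<le> card {t. extends r ?k (length v) (enc v) t} \<and> idx < 2 ^ Suc m
     \<and> suffix_machine r (sd_code ?k @ bin_index (Suc m) idx) v = Some u" by (rule suffix_machine_describes[OF pp(1)]) (simp add: pp(2))
    then obtain m idx where m: "2 ^ m \<le> card {t. extends r ?k (length v) (enc v) t}" "idx < 2 ^ Suc m"
      "suffix_machine r (sd_code ?k @ bin_index (Suc m) idx) v = Some u" by blast
    have k1: "KC W u v \<le> 2 * bit_length ?k + 1 + Suc m + c_suffix"
      using c_suffix m(3) bin_index_props[OF m(2)] by (fastforce simp: length_sd_code)
    obtain idx2 where mk: "m \<le> ?k" and i2: "idx2 < 2 ^ (Suc ?k - m)"
      "prefix_machine r (sd_code ?k @ sd_code m @ sd_code (length v) @ bin_index (Suc ?k - m) idx2) = Some v"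
      using prefix_machine_describes[OF m(1)] by blast
    have k2: "KP U v \<le> (2 * bit_length ?k + 1) + (2 * bit_length m + 1) + (2 * bit_length (length v) + 1) + (Suc ?k - m) + c_prefix"
      using c_prefix i2(2) bin_index_props[OF i2(1)] by (fastforce simp: length_sd_code)
    have "bit_length m \<le> bit_length ?k" by (rule bit_length_mono[OF mk])
    then show "KC W u v + KP U v \<le> ?k + 6 * bit_length ?k + 2 * bit_length (length v) + (c_suffix + c_prefix + 6)"
      using k1 k2 mk by linarith
  qed
qed

section \<open>Complexity inequalities up to logarithmic terms\<close>

lemma bit_length_KP_le:
  assumes "universal1 U"
  obtains c where "\<And>u n. length u \<le> n \<Longrightarrow> bit_length (KP U u) \<le> bit_length n + c"
proof -
  obtain c where c: "\<And>u. KP U u \<le> length u + c"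
    using KP_le_length[OF assms] by blast
  have "bit_length (KP U u) \<le> bit_length n + c" if "length u \<le> n" for u n
  proof -
    have "bit_length (KP U u) \<le> bit_length (n + c)"
      using c[of u] that by (intro bit_length_mono) simp
    also have "\<dots> \<le> bit_length n + c" by (rule bit_length_add_le)
    finally show ?thesis .
  qed
  then show thesis by (rule that)
qed

lemma complexity_inequalities:
  assumes U: "universal1 U" and W: "universal2 W"
  obtains c where
    "\<And>u v w n. length (v @ w) \<le> n \<Longrightarrow> KC W u (v @ w) \<le> KC W u v + 2 * bit_length n + c"
    "\<And>u v w n. length (w @ v) \<le> n \<Longrightarrow> KC W u (w @ v) \<le> KC W u v + 2 * bit_length n + c"
    "\<And>v w n. length (v @ w) \<le> n \<Longrightarrow> KP U (v @ w) \<le> KP U v + KP U w + 2 * bit_length n + c"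
    "\<And>a u b n. length (a @ u @ b) \<le> n \<Longrightarrow>
       KP U (a @ u @ b) \<le> KP U (a @ b) + KC W u (a @ b) + 4 * bit_length n + c"
    "\<And>u v n. length (v @ u) \<le> n \<Longrightarrow> KC W u v + KP U v \<le> KP U (v @ u) + 8 * bit_length n + c"
proof -
  obtain cR where cR: "\<forall>u v w. KC W u (v @ w) \<le> KC W u v + 2 * bit_length (length w) + cR"
    using KC_append_right_le[OF W] by blast
  obtain cL where cL: "\<forall>u v w. KC W u (w @ v) \<le> KC W u v + 2 * bit_length (length w) + cL"
    using KC_append_left_le[OF W] by blast
  obtain cA where cA: "\<forall>v w. KP U (v @ w) \<le> KP U v + KP U w + 2 * bit_length (KP U v) + cA"
    using KP_append_le[OF U] by blast
  obtain cI where cI: "\<forall>a u b. KP U (a @ u @ b) \<le> KP U (a @ b) + KC W u (a @ b)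
      + 2 * bit_length (KP U (a @ b)) + 2 * bit_length (length a) + cI"
    using KP_insert_le[OF U W] by blast
  obtain cS where cS: "\<forall>v u. KC W u v + KP U v
      \<le> KP U (v @ u) + 6 * bit_length (KP U (v @ u)) + 2 * bit_length (length v) + cS"
    using KC_plus_KP_le[OF U W] by blast
  obtain cK where cK: "\<And>u n. length u \<le> n \<Longrightarrow> bit_length (KP U u) \<le> bit_length n + cK"
    using bit_length_KP_le[OF U] by blast
  have len: "bit_length m \<le> bit_length n" if "m \<le> n" for m n
    using that by (rule bit_length_mono)
  show thesis
  proof (rule that[of "cR + cL + cA + cI + cS + 6 * cK"])
    fix u v w :: "bool list" and n assume "length (v @ w) \<le> n"
    then show "KC W u (v @ w) \<le> KC W u v + 2 * bit_length n + (cR + cL + cA + cI + cS + 6 * cK)"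
      using cR[rule_format, of u v w] len[of "length w" n] by simp
  next
    fix u v w :: "bool list" and n assume "length (w @ v) \<le> n"
    then show "KC W u (w @ v) \<le> KC W u v + 2 * bit_length n + (cR + cL + cA + cI + cS + 6 * cK)"
      using cL[rule_format, of u w v] len[of "length w" n] by simp
  next
    fix v w :: "bool list" and n assume "length (v @ w) \<le> n"
    then show "KP U (v @ w) \<le> KP U v + KP U w + 2 * bit_length n + (cR + cL + cA + cI + cS + 6 * cK)"
      using cA[rule_format, of v w] cK[of v n] by simp
  next
    fix a u b :: "bool list" and n assume n: "length (a @ u @ b) \<le> n"
    then have "bit_length (KP U (a @ b)) \<le> bit_length n + cK" "bit_length (length a) \<le> bit_length n"
      by (auto intro: cK len)
    then show "KP U (a @ u @ b) \<le> KP U (a @ b) + KC W u (a @ b) + 4 * bit_length n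
        + (cR + cL + cA + cI + cS + 6 * cK)"
      using cI[rule_format, of a u b] by simp
  next
    fix u v :: "bool list" and n assume n: "length (v @ u) \<le> n"
    then have "bit_length (KP U (v @ u)) \<le> bit_length n + cK" "bit_length (length v) \<le> bit_length n"
      by (auto intro: cK len)
    then show "KC W u v + KP U v \<le> KP U (v @ u) + 8 * bit_length n + (cR + cL + cA + cI + cS + 6 * cK)"
      using cS[rule_format, of u v] by simp
  qed
qed

definition mutual_info :: "(bool list \<Rightarrow> bool list option) \<Rightarrow> bool list \<Rightarrow> bool list \<Rightarrow> real" where
  "mutual_info U v w = real (KP U v) + real (KP U w) - real (KP U (v @ w))"

lemma abs_diff_le_max_mutual_info:
  fixes k k' e :: nat
  assumes "k' \<le> k + e" and "k + real z \<le> k' + real a + real b + e"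
  shows "\<bar>real k' - real k\<bar> \<le> max 0 (real a + real b - real z) + real e"
  using assms by (simp add: abs_le_iff) linarith

text \<open>Adding a condition \<open>Y\<close> changes the complexity of \<open>X\<close> given \<open>P\<close> by at most the
  information that \<open>P X\<close> carries about \<open>Y\<close>, plus logarithmic terms; the decrease uses
  symmetry of information, the increase is trivial.\<close>

lemma KC_append_right_deviation:
  assumes "universal1 U" and "universal2 W"
  obtains c where "0 \<le> c" and "\<And>P X Y. \<bar>real (KC W X (P @ Y)) - real (KC W X P)\<bar>
    \<le> max 0 (mutual_info U (P @ X) Y) + c * (1 + real (bit_length (length (P @ X @ Y))))"
proof -
  obtain c where right: "\<And>u v w n. length (v @ w) \<le> n \<Longrightarrow> KC W u (v @ w) \<le> KC W u v + 2 * bit_length n + c"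
    and left: "\<And>u v w n. length (w @ v) \<le> n \<Longrightarrow> KC W u (w @ v) \<le> KC W u v + 2 * bit_length n + c"
    and app: "\<And>v w n. length (v @ w) \<le> n \<Longrightarrow> KP U (v @ w) \<le> KP U v + KP U w + 2 * bit_length n + c"
    and ins: "\<And>a u b n. length (a @ u @ b) \<le> n \<Longrightarrow>
       KP U (a @ u @ b) \<le> KP U (a @ b) + KC W u (a @ b) + 4 * bit_length n + c"
    and soi: "\<And>u v n. length (v @ u) \<le> n \<Longrightarrow> KC W u v + KP U v \<le> KP U (v @ u) + 8 * bit_length n + c"
    using complexity_inequalities[OF assms] by blast
  show thesis
  proof (rule that[of "real (3 * c + 14)"])
    fix P X Y :: "bool list"
    define L where "L = bit_length (length (P @ X @ Y))"
    have up: "KC W X (P @ Y) \<le> KC W X P + (14 * L + 3 * c)"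
      using right[of P Y "length (P @ X @ Y)" X] unfolding L_def by simp
    have "KC W X P + KP U P \<le> KP U (P @ X) + 8 * L + c"
      using soi[of P X "length (P @ X @ Y)"] unfolding L_def by simp
    moreover have "KP U (P @ X @ Y) \<le> KP U (P @ Y) + KC W X (P @ Y) + 4 * L + c"
      using ins[of P X Y "length (P @ X @ Y)"] unfolding L_def by simp
    moreover have "KP U (P @ Y) \<le> KP U P + KP U Y + 2 * L + c"
      using app[of P Y "length (P @ X @ Y)"] unfolding L_def by simp
    ultimately have down: "KC W X P + real (KP U ((P @ X) @ Y))
        \<le> KC W X (P @ Y) + real (KP U (P @ X)) + real (KP U Y) + (14 * L + 3 * c)"
      by simp
    have "\<bar>real (KC W X (P @ Y)) - real (KC W X P)\<bar> \<le> max 0 (mutual_info U (P @ X) Y) + real (14 * L + 3 * c)"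
      unfolding mutual_info_def by (rule abs_diff_le_max_mutual_info[OF up]) (use down in simp)
    also have "real (14 * L + 3 * c) \<le> real (3 * c + 14) * (1 + real L)"
      by (simp add: algebra_simps)
    finally show "\<bar>real (KC W X (P @ Y)) - real (KC W X P)\<bar>
      \<le> max 0 (mutual_info U (P @ X) Y) + real (3 * c + 14) * (1 + real (bit_length (length (P @ X @ Y))))"
      unfolding L_def by simp
  qed simp
qed

lemma KC_append_left_deviation:
  assumes "universal1 U" and "universal2 W"
  obtains c where "0 \<le> c" and "\<And>Q P X. \<bar>real (KC W X (Q @ P)) - real (KC W X P)\<bar>
    \<le> max 0 (mutual_info U Q (P @ X)) + c * (1 + real (bit_length (length (Q @ P @ X))))"
proof -
  obtain c where right: "\<And>u v w n. length (v @ w) \<le> n \<Longrightarrow> KC W u (v @ w) \<le> KC W u v + 2 * bit_length n + c"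
    and left: "\<And>u v w n. length (w @ v) \<le> n \<Longrightarrow> KC W u (w @ v) \<le> KC W u v + 2 * bit_length n + c"
    and app: "\<And>v w n. length (v @ w) \<le> n \<Longrightarrow> KP U (v @ w) \<le> KP U v + KP U w + 2 * bit_length n + c"
    and ins: "\<And>a u b n. length (a @ u @ b) \<le> n \<Longrightarrow>
       KP U (a @ u @ b) \<le> KP U (a @ b) + KC W u (a @ b) + 4 * bit_length n + c"
    and soi: "\<And>u v n. length (v @ u) \<le> n \<Longrightarrow> KC W u v + KP U v \<le> KP U (v @ u) + 8 * bit_length n + c"
    using complexity_inequalities[OF assms] by blast
  show thesis
  proof (rule that[of "real (3 * c + 14)"])
    fix Q P X :: "bool list"
    define L where "L = bit_length (length (Q @ P @ X))"
    have up: "KC W X (Q @ P) \<le> KC W X P + (14 * L + 3 * c)"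
      using left[of Q P "length (Q @ P @ X)" X] unfolding L_def by simp
    have "KC W X P + KP U P \<le> KP U (P @ X) + 8 * L + c"
      using soi[of P X "length (Q @ P @ X)"] unfolding L_def by simp
    moreover have "KP U (Q @ P @ X) \<le> KP U (Q @ P) + KC W X (Q @ P) + 4 * L + c"
      using ins[of "Q @ P" X "[]" "length (Q @ P @ X)"] unfolding L_def by simp
    moreover have "KP U (Q @ P) \<le> KP U Q + KP U P + 2 * L + c"
      using app[of Q P "length (Q @ P @ X)"] unfolding L_def by simp
    ultimately have down: "KC W X P + real (KP U (Q @ P @ X))
        \<le> KC W X (Q @ P) + real (KP U Q) + real (KP U (P @ X)) + (14 * L + 3 * c)"
      by simp
    have "\<bar>real (KC W X (Q @ P)) - real (KC W X P)\<bar> \<le> max 0 (mutual_info U Q (P @ X)) + real (14 * L + 3 * c)"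
      unfolding mutual_info_def by (rule abs_diff_le_max_mutual_info[OF up]) (use down in simp)
    also have "real (14 * L + 3 * c) \<le> real (3 * c + 14) * (1 + real L)"
      by (simp add: algebra_simps)
    finally show "\<bar>real (KC W X (Q @ P)) - real (KC W X P)\<bar>
      \<le> max 0 (mutual_info U Q (P @ X)) + real (3 * c + 14) * (1 + real (bit_length (length (Q @ P @ X))))"
      unfolding L_def by simp
  qed simp
qed

section \<open>The block boundaries\<close>

lemma sum_tb_eq: "(\<Sum>l\<in>{1..Suc k}. tb a b l) = a * (b + 1) ^ k"
proof (induction k)
  case (Suc k)
  have "(\<Sum>l\<in>{1..Suc (Suc k)}. tb a b l) = (\<Sum>l\<in>{1..Suc k}. tb a b l) + tb a b (Suc (Suc k))"
    by simp
  also have "\<dots> = (b + 1) * a * (b + 1) ^ k"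
    using Suc by (simp add: algebra_simps)
  finally show ?case by (simp add: algebra_simps)
qed simp

lemma tb_Suc_Suc_eq: "tb a b (Suc (Suc k)) = a * b * (b + 1) ^ k"
  using sum_tb_eq[of a b k] by simp

declare tb.simps(3)[simp del]

lemma nat_cases_Suc_Suc:
  obtains "i = 0" | "i = Suc 0" | k where "i = Suc (Suc k)"
  by (metis not0_implies_Suc)

lemma tb_le: "tb a b i \<le> a * (b + 1) ^ i"
proof (cases i rule: nat_cases_Suc_Suc)
  case (3 k)
  then have "tb a b i = a * (b * (b + 1) ^ k)" by (simp add: tb_Suc_Suc_eq)
  also have "\<dots> \<le> a * ((b + 1) * (b + 1) * (b + 1) ^ k)"
    by (intro mult_le_mono2 mult_le_mono1) simp
  finally show ?thesis using 3 by (simp add: algebra_simps)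
qed auto

lemma tb_pos: "0 < a \<Longrightarrow> 1 \<le> b \<Longrightarrow> 1 \<le> i \<Longrightarrow> 1 \<le> tb a b i"
  by (cases i rule: nat_cases_Suc_Suc) (auto simp: tb_Suc_Suc_eq)

lemma tb_le_Suc: "1 \<le> b \<Longrightarrow> tb a b i \<le> tb a b (Suc i)"
  by (cases i rule: nat_cases_Suc_Suc) (auto simp: tb_Suc_Suc_eq)

lemma log_tb_le: "log 2 (real (tb a b i) + 1) \<le> log 2 (real a + 1) + real i * log 2 (real b + 1)"
proof -
  have "tb a b i + 1 \<le> (a + 1) * (b + 1) ^ i"
  proof -
    have "1 \<le> (b + 1) ^ i" by simp
    then have "tb a b i + 1 \<le> a * (b + 1) ^ i + (b + 1) ^ i" using tb_le[of a b i] by linarith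
    then show ?thesis by (simp add: algebra_simps)
  qed
  then have "real (tb a b i + 1) \<le> real ((a + 1) * (b + 1) ^ i)"
    by (simp only: of_nat_le_iff)
  then have "real (tb a b i) + 1 \<le> (real a + 1) * (real b + 1) ^ i"
    by (simp add: algebra_simps)
  then have "log 2 (real (tb a b i) + 1) \<le> log 2 ((real a + 1) * (real b + 1) ^ i)"
    by (intro log_mono) simp_all
  also have "\<dots> = log 2 (real a + 1) + real i * log 2 (real b + 1)"
    by (simp add: log_mult log_nat_power)
  finally show ?thesis .
qed

text \<open>Since the blocks grow geometrically, logarithmic terms in their lengths are linear in the
  block indices.\<close>

lemma tb_log_growth:
  fixes \<alpha> \<beta> :: real
  assumes "0 \<le> \<alpha>" and "0 \<le> \<beta>"
  obtains C where "\<And>i j. 1 \<le> i + j \<Longrightarrow>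
    \<alpha> * (1 + log 2 (real (tb a b i)) + log 2 (real (tb a b j)))
      + \<beta> * (1 + real (bit_length (tb a b i + tb a b j))) \<le> C * real (i + j)"
proof -
  define g where "g k = log 2 (real (tb a b k) + 1)" for k
  define A where "A = log 2 (real a + 1)"
  define B where "B = log 2 (real b + 1)"
  have A: "0 \<le> A" and B: "0 \<le> B" by (simp_all add: A_def B_def)
  have log_le_g: "log 2 (real (tb a b k)) \<le> g k" for k
  proof (cases "tb a b k = 0")
    case True
    then show ?thesis by (simp add: g_def log_def)
  qed (simp add: g_def)
  have bit_length_le_g: "real (bit_length (tb a b i + tb a b j)) \<le> g i + g j" for i j
  proof -
    have "real (bit_length (tb a b i + tb a b j)) \<le> log 2 (real (tb a b i + tb a b j) + 1)"
      by (rule real_bit_length_le_log)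
    also have "\<dots> \<le> log 2 ((real (tb a b i) + 1) * (real (tb a b j) + 1))"
      by (intro log_mono) (simp_all add: algebra_simps)
    also have "\<dots> = g i + g j"
      unfolding g_def by (simp add: log_mult add_nonneg_pos)
    finally show ?thesis .
  qed
  show thesis
  proof (rule that[of "(\<alpha> + \<beta>) * (1 + 2 * A + B)"])
    fix i j :: nat assume ij: "1 \<le> i + j"
    have "\<alpha> * (1 + log 2 (real (tb a b i)) + log 2 (real (tb a b j)))
        + \<beta> * (1 + real (bit_length (tb a b i + tb a b j))) \<le> (\<alpha> + \<beta>) * (1 + g i + g j)"
      using log_le_g[of i] log_le_g[of j] bit_length_le_g[of i j] assms
      by (simp add: distrib_right add_mono mult_left_mono)
    also have "\<dots> \<le> (\<alpha> + \<beta>) * (1 + 2 * A + real (i + j) * B)"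
      using log_tb_le[of a b i] log_tb_le[of a b j] assms
      by (intro mult_left_mono) (simp_all add: g_def A_def B_def algebra_simps)
    also have "\<dots> \<le> (\<alpha> + \<beta>) * ((1 + 2 * A + B) * real (i + j))"
    proof (intro mult_left_mono)
      have "(1 + 2 * A) * 1 \<le> (1 + 2 * A) * real (i + j)"
        using ij A by (intro mult_left_mono) simp_all
      then show "1 + 2 * A + real (i + j) * B \<le> (1 + 2 * A + B) * real (i + j)"
        by (simp add: algebra_simps)
    qed (use assms in simp)
    finally show "\<alpha> * (1 + log 2 (real (tb a b i)) + log 2 (real (tb a b j)))
        + \<beta> * (1 + real (bit_length (tb a b i + tb a b j))) \<le> (\<alpha> + \<beta>) * (1 + 2 * A + B) * real (i + j)"
      by (simp add: mult.assoc)
  qed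
qed

lemma length_seg: "length (seg x m n) = Suc n - m"
  by (simp add: seg_def del: upt_Suc)

lemma seg_append: "m \<le> n \<Longrightarrow> seg x 1 m @ seg x (m + 1) n = seg x 1 n"
proof -
  assume "m \<le> n"
  then have "[1..<Suc n] = [1..<Suc m] @ [Suc m..<Suc n]"
    using upt_add_eq_append[of 1 "Suc m" "n - m"] by simp
  then show ?thesis by (simp add: seg_def)
qed

lemma rand_rate_le_1:
  assumes U: "universal1 U" and r: "rand_rate U \<tau> x"
  shows "\<tau> \<le> 1"
proof (rule ccontr)
  assume "\<not> \<tau> \<le> 1"
  obtain cU where cU: "\<forall>u. KP U u \<le> length u + cU" using KP_le_length[OF U] by blast
  obtain N where N: "\<forall>n\<ge>N. \<tau> * real n \<le> real (KP U (seg x 1 n))"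
    using r unfolding rand_rate_def eventually_sequentially by blast
  define n where "n = max N (nat \<lceil>real cU / (\<tau> - 1)\<rceil> + 1)"
  have "\<tau> * real n \<le> real (KP U (seg x 1 n))" using N n_def by simp
  also have "\<dots> \<le> real n + real cU"
    using cU[rule_format, of "seg x 1 n"] length_seg[of x 1 n] by simp
  finally have "(\<tau> - 1) * real n \<le> real cU" by (simp add: algebra_simps)
  moreover have "real cU / (\<tau> - 1) < real n" unfolding n_def by linarith
  ultimately show False using \<open>\<not> \<tau> \<le> 1\<close> by (simp add: divide_less_eq mult.commute)
qed

lemma block_factor_ge_1:
  assumes "universal1 U" and "rand_rate U \<tau> x" and "\<sigma> < \<tau>" and "0 < \<sigma>'"
    and "b = nat \<lceil>(1 - \<sigma>) / \<sigma>'\<rceil>"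
  shows "1 \<le> b"
proof -
  have "\<sigma> < 1" using rand_rate_le_1[OF assms(1,2)] assms(3) by simp
  then have "1 \<le> \<lceil>(1 - \<sigma>) / \<sigma>'\<rceil>" using assms(4) by simp
  then show ?thesis using assms(5) by linarith
qed

lemma KC_seg_append_deviation:
  assumes "universal1 U" and "universal2 W"
  obtains c where "0 \<le> c"
    and "\<And>x m n w. m \<le> n \<Longrightarrow>
      \<bar>real (KC W (seg x (m + 1) n) (seg x 1 m @ w)) - real (KC W (seg x (m + 1) n) (seg x 1 m))\<bar>
        \<le> max 0 (mutual_info U (seg x 1 n) w) + c * (1 + real (bit_length (n + length w)))"
    and "\<And>y m n w. m \<le> n \<Longrightarrow>
      \<bar>real (KC W (seg y (m + 1) n) (w @ seg y 1 m)) - real (KC W (seg y (m + 1) n) (seg y 1 m))\<bar>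
        \<le> max 0 (mutual_info U w (seg y 1 n)) + c * (1 + real (bit_length (length w + n)))"
proof -
  obtain cR where "0 \<le> cR" and right: "\<And>P X Y. \<bar>real (KC W X (P @ Y)) - real (KC W X P)\<bar>
      \<le> max 0 (mutual_info U (P @ X) Y) + cR * (1 + real (bit_length (length (P @ X @ Y))))"
    using KC_append_right_deviation[OF assms] by blast
  obtain cL where "0 \<le> cL" and left: "\<And>Q P X. \<bar>real (KC W X (Q @ P)) - real (KC W X P)\<bar>
      \<le> max 0 (mutual_info U Q (P @ X)) + cL * (1 + real (bit_length (length (Q @ P @ X))))"
    using KC_append_left_deviation[OF assms] by blast
  have le_max: "c * (1 + real L) \<le> max cR cL * (1 + real L)" if "c = cR \<or> c = cL" for c L
    using that by (intro mult_right_mono) auto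
  show thesis
  proof (rule that[of "max cR cL"])
    show "0 \<le> max cR cL" using \<open>0 \<le> cR\<close> by simp
  next
    fix x :: "nat \<Rightarrow> bool" and m n :: nat and w :: "bool list" assume "m \<le> n"
    then have "length (seg x 1 m) + length (seg x (m + 1) n) = n"
      by (simp add: length_seg)
    then have "\<bar>real (KC W (seg x (m + 1) n) (seg x 1 m @ w)) - real (KC W (seg x (m + 1) n) (seg x 1 m))\<bar>
      \<le> max 0 (mutual_info U (seg x 1 n) w) + cR * (1 + real (bit_length (n + length w)))"
      (is "?d \<le> ?i + _")
      using right[of "seg x (m + 1) n" "seg x 1 m" w] seg_append[OF \<open>m \<le> n\<close>]
      by (simp add: add.assoc[symmetric])
    then show "?d \<le> ?i + max cR cL * (1 + real (bit_length (n + length w)))"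
      using le_max[of cR "bit_length (n + length w)"] by linarith
  next
    fix y :: "nat \<Rightarrow> bool" and m n :: nat and w :: "bool list" assume "m \<le> n"
    then have "length (w @ seg y 1 m @ seg y (m + 1) n) = length w + n"
      by (simp add: length_seg)
    then have "\<bar>real (KC W (seg y (m + 1) n) (w @ seg y 1 m)) - real (KC W (seg y (m + 1) n) (seg y 1 m))\<bar>
      \<le> max 0 (mutual_info U w (seg y 1 n)) + cL * (1 + real (bit_length (length w + n)))"
      (is "?d \<le> ?i + _")
      using left[of "seg y (m + 1) n" w "seg y 1 m"] seg_append[OF \<open>m \<le> n\<close>] by simp
    then show "?d \<le> ?i + max cR cL * (1 + real (bit_length (length w + n)))"
      using le_max[of cL "bit_length (length w + n)"] by linarith
  qed
qed

lemma indep_mutual_info_le: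
  assumes "indep U x y"
  obtains c0 where "0 \<le> c0" and "\<And>n m. 1 \<le> n \<Longrightarrow> 1 \<le> m \<Longrightarrow>
    max 0 (mutual_info U (seg x 1 n) (seg y 1 m)) \<le> c0 * (1 + log 2 (real n) + log 2 (real m))"
proof -
  obtain c where c: "\<forall>n\<ge>1. \<forall>m\<ge>1. real (KP U (seg x 1 n @ seg y 1 m)) \<ge>
      real (KP U (seg x 1 n)) + real (KP U (seg y 1 m)) - c * (1 + log 2 (real n) + log 2 (real m))"
    using assms unfolding indep_def by blast
  show thesis
  proof (rule that[of "max c 0"])
    fix n m :: nat assume n: "1 \<le> n" and m: "1 \<le> m"
    have "c * (1 + log 2 (real n) + log 2 (real m)) \<le> max c 0 * (1 + log 2 (real n) + log 2 (real m))"
      using n m by (intro mult_right_mono) simp_all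
    moreover have "0 \<le> max c 0 * (1 + log 2 (real n) + log 2 (real m))"
      using n m by simp
    ultimately show "max 0 (mutual_info U (seg x 1 n) (seg y 1 m)) \<le> max c 0 * (1 + log 2 (real n) + log 2 (real m))"
      using c n m unfolding mutual_info_def by fastforce
  qed simp
qed

theorem lemma4p6:
  fixes U :: "bool list \<Rightarrow> bool list option"
    and W :: "bool list \<Rightarrow> bool list \<Rightarrow> bool list option"
    and x y :: "nat \<Rightarrow> bool"
    and \<tau> \<sigma> \<sigma>' :: real and a b :: nat
  assumes "universal1 U" and "universal2 W"
    and "indep U x y"
    and "\<tau> > 0" and "rand_rate U \<tau> x" and "rand_rate U \<tau> y"
    and "0 < \<sigma>" and "\<sigma> < \<tau>" and "0 < \<sigma>'" and "\<sigma>' < \<tau> - \<sigma>"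
    and "b = nat \<lceil>(1 - \<sigma>) / \<sigma>'\<rceil>"
    and "a > 0"
  shows "\<exists>c::real. \<forall>i\<ge>1. \<forall>j\<ge>1.
     \<bar>real (KC W (seg x (tb a b (i - 1) + 1) (tb a b i))
                   (seg x 1 (tb a b (i - 1)) @ seg y 1 (tb a b j)))
      - real (KC W (seg x (tb a b (i - 1) + 1) (tb a b i)) (seg x 1 (tb a b (i - 1))))\<bar>
        \<le> c * real (i + j)
   \<and> \<bar>real (KC W (seg y (tb a b (i - 1) + 1) (tb a b i))
                   (seg x 1 (tb a b j) @ seg y 1 (tb a b (i - 1))))
      - real (KC W (seg y (tb a b (i - 1) + 1) (tb a b i)) (seg y 1 (tb a b (i - 1))))\<bar>
        \<le> c * real (i + j)"
proof -
  let ?t = "tb a b"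
  have b: "1 \<le> b" using block_factor_ge_1[OF assms(1,5,8,9,11)] .
  obtain c where c: "0 \<le> c"
    "\<And>x m n w. m \<le> n \<Longrightarrow>
      \<bar>real (KC W (seg x (m + 1) n) (seg x 1 m @ w)) - real (KC W (seg x (m + 1) n) (seg x 1 m))\<bar>
        \<le> max 0 (mutual_info U (seg x 1 n) w) + c * (1 + real (bit_length (n + length w)))"
    "\<And>y m n w. m \<le> n \<Longrightarrow>
      \<bar>real (KC W (seg y (m + 1) n) (w @ seg y 1 m)) - real (KC W (seg y (m + 1) n) (seg y 1 m))\<bar>
        \<le> max 0 (mutual_info U w (seg y 1 n)) + c * (1 + real (bit_length (length w + n)))"
    using KC_seg_append_deviation[OF assms(1,2)] by blast
  obtain c0 where c0: "0 \<le> c0" "\<And>n m. 1 \<le> n \<Longrightarrow> 1 \<le> m \<Longrightarrow>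
      max 0 (mutual_info U (seg x 1 n) (seg y 1 m)) \<le> c0 * (1 + log 2 (real n) + log 2 (real m))"
    using indep_mutual_info_le[OF assms(3)] by blast
  obtain C where C: "\<And>i j. 1 \<le> i + j \<Longrightarrow> c0 * (1 + log 2 (real (?t i)) + log 2 (real (?t j)))
      + c * (1 + real (bit_length (?t i + ?t j))) \<le> C * real (i + j)"
    using tb_log_growth[of c0 c] c0(1) c(1) by auto
  show ?thesis
  proof (intro exI[of _ C] allI impI conjI)
    fix i j :: nat assume i: "1 \<le> i" and j: "1 \<le> j"
    have split: "?t (i - 1) \<le> ?t i" using tb_le_Suc[OF b, of a "i - 1"] i by simp
    have t: "1 \<le> ?t i" "1 \<le> ?t j" using tb_pos[OF assms(12) b] i j by auto
    have "\<bar>real (KC W (seg x (?t (i - 1) + 1) (?t i)) (seg x 1 (?t (i - 1)) @ seg y 1 (?t j)))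
        - real (KC W (seg x (?t (i - 1) + 1) (?t i)) (seg x 1 (?t (i - 1))))\<bar>
      \<le> max 0 (mutual_info U (seg x 1 (?t i)) (seg y 1 (?t j))) + c * (1 + real (bit_length (?t i + ?t j)))"
      (is "?dx \<le> _")
      using c(2)[OF split, of x "seg y 1 (?t j)"] by (simp add: length_seg)
    then show "?dx \<le> C * real (i + j)"
      using c0(2)[OF t] C[of i j] i by linarith
    have "\<bar>real (KC W (seg y (?t (i - 1) + 1) (?t i)) (seg x 1 (?t j) @ seg y 1 (?t (i - 1))))
        - real (KC W (seg y (?t (i - 1) + 1) (?t i)) (seg y 1 (?t (i - 1))))\<bar>
      \<le> max 0 (mutual_info U (seg x 1 (?t j)) (seg y 1 (?t i))) + c * (1 + real (bit_length (?t j + ?t i)))"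
      (is "?dy \<le> _")
      using c(3)[OF split, of y "seg x 1 (?t j)"] by (simp add: length_seg)
    then show "?dy \<le> C * real (i + j)"
      using c0(2)[OF t(2,1)] C[of j i] i unfolding add.commute[of j i] by linarith
  qed
qed

end
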